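(* For every $n\ge 1$, the set $\{\varepsilon f_P:\varepsilon\in\{\pm1\},\ P\text{ a shrub on }\{1,\dots,n\}\}\subseteq\operatorname{Mould}(\{1,\dots,n\})$ is stable under the anticyclic action of $\mathfrak{S}_{n+1}$; consequently the signed shrubs $\operatorname{Arb}\times\mathbb{Z}/2$, embedded via $(\varepsilon,P)\mapsto\varepsilon f_P$ (resp. $(\varepsilon,P)\mapsto\varepsilon\gamma(P)$), form a set-theoretic anticyclic suboperad of $\operatorname{Mould}$ (resp. of $\operatorname{Zinb}$).
   Context: A shrub $P$ on a finite set $I$ is a set $E$ of edges (unordered pairs of distinct elements of $I$) with a height function $h_P:I\to\mathbb{N}$; $j$ covers $i$ if $\{i,j\}\in E$ and $h_P(j)=h_P(i)+1$. Axioms: (1) edges join vertices whose heights differ by $1$; (2) every vertex of positive height covers some vertex; (3) no four distinct $a,b,c,d$ with $a$ covering $b$ and $c$, $c$ covering $d$, $\{b,d\}\notin E$; (4) no five distinct $a,b,c,d,e$ with $a$ covering $c,d$, $b$ covering $d,e$, $\{a,e\}\notin E$, $\{b,c\}\notin E$. Shrubs form a set operad $\operatorname{Arb}$ with composition $P\circ_i P'$ = the shrub on $(I\setminus\{i\})\sqcup I'$ with height $h_P$ on $I\setminus\{i\}$, $h_{P'}+h_P(i)$ on $I'$, and edges those of $P$ not containing $i$, those of $P'$, and all $\{j,k\}$ with $j$ adjacent to $i$ in $P$ and $k$ of height $0$ in $P'$. $\operatorname{Arb}\times\mathbb{Z}/2$ has elements $(\varepsilon,P)$, $\varepsilon=\pm1$,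 with compositions multiplying signs. $\operatorname{Mould}(I)=\mathbb{Q}(u_i:i\in I)$ with $f\circ_i g=(\sum_{j\in J}u_j)\,g\,f|_{u_i=\sum_{j\in J}u_j}$; its anticyclic structure: $\mathfrak{S}_{n+1}$ acts on $\operatorname{Mould}(\{1,\dots,n\})$ by introducing $u_0=-(u_1+\dots+u_n)$, permuting $u_0,\dots,u_n$, and re-expressing in $u_1,\dots,u_n$. $\operatorname{Zinb}$ is the Zinbiel operad ($\operatorname{Zinb}(I)$ has basis the total orders on $I$), embedded in $\operatorname{Mould}$ by the injective operad morphism $\iota(\pi)=1/\prod_{i}\sum_{j\ge_\pi i}u_j$, whose image is stable under these actions, giving $\operatorname{Zinb}$ its anticyclic structure. $\gamma(P)\in\operatorname{Zinb}(I)$ is the sum of total orders $<$ on $I$ such that every vertex of positive height covers some smaller vertex, and $f_P=\iota(\gamma(P))$; explicitly, $f_P$ is the image of $P$ under the operad morphism $\operatorname{Arb}\to\operatorname{Mould}$ sending $[2\triangleleft 1]$ (edge $\{1,2\}$, $h(2)=0$, $h(1)=1$) to $1/(u_1(u_1+u_2))$ and $[1][2]$ (no edge) to $1/(u_1u_2)$. *)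

theory Defs
  imports Complex_Main "HOL-Combinatorics.Permutations"
begin

text \<open>A shrub on I = {1..n}: a set E of edges (2-element subsets of I)
  together with a height function h. Heights outside I are irrelevant.\<close>

definition covers :: "nat set set \<Rightarrow> (nat \<Rightarrow> nat) \<Rightarrow> nat \<Rightarrow> nat \<Rightarrow> bool" where
  "covers E h j i \<longleftrightarrow> {i, j} \<in> E \<and> h j = h i + 1"

definition shrub :: "nat \<Rightarrow> nat set set \<Rightarrow> (nat \<Rightarrow> nat) \<Rightarrow> bool" where
  "shrub n E h \<longleftrightarrow>
     (\<forall>e\<in>E. \<exists>i j. e = {i, j} \<and> i \<noteq> j \<and> i \<in> {1..n} \<and> j \<in> {1..n}) \<and>
     \<comment> \<open>(1) edges join vertices whose heights differ by 1\<close>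
     (\<forall>i j. {i, j} \<in> E \<longrightarrow> h i = h j + 1 \<or> h j = h i + 1) \<and>
     \<comment> \<open>(2) every vertex of positive height covers some vertex\<close>
     (\<forall>i\<in>{1..n}. 0 < h i \<longrightarrow> (\<exists>j\<in>{1..n}. covers E h i j)) \<and>
     \<comment> \<open>(3)\<close>
     \<not> (\<exists>a\<in>{1..n}. \<exists>b\<in>{1..n}. \<exists>c\<in>{1..n}. \<exists>d\<in>{1..n}.
          distinct [a, b, c, d] \<and> covers E h a b \<and> covers E h a c \<and>
          covers E h c d \<and> {b, d} \<notin> E) \<and>
     \<comment> \<open>(4)\<close>
     \<not> (\<exists>a\<in>{1..n}. \<exists>b\<in>{1..n}. \<exists>c\<in>{1..n}. \<exists>d\<in>{1..n}. \<exists>e\<in>{1..n}.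
          distinct [a, b, c, d, e] \<and> covers E h a c \<and> covers E h a d \<and>
          covers E h b d \<and> covers E h b e \<and> {a, e} \<notin> E \<and> {b, c} \<notin> E)"

text \<open>A total order on {1..n} is represented by the list of its elements in
  increasing order.\<close>

definition total_orders :: "nat \<Rightarrow> nat list set" where
  "total_orders n = {xs. distinct xs \<and> set xs = {1..n}}"

text \<open>Moulds are rational functions in u_1..u_n; they are represented by
  their evaluation functions on rational points u (only u 1..u n matter).\<close>

definition iota :: "nat list \<Rightarrow> (nat \<Rightarrow> rat) \<Rightarrow> rat" where
  "iota xs u = 1 / (\<Prod>k<length xs. (\<Sum>j\<in>set (drop k xs). u j))"

definition before :: "nat list \<Rightarrow> nat \<Rightarrow> nat \<Rightarrow> bool" where
  "before xs a b \<longleftrightarrow> (\<exists>k l. k < l \<and> l < length xs \<and> xs ! k = a \<and> xs ! l = b)"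

definition gamma_orders :: "nat \<Rightarrow> nat set set \<Rightarrow> (nat \<Rightarrow> nat) \<Rightarrow> nat list set" where
  "gamma_orders n E h = {xs \<in> total_orders n.
      \<forall>i\<in>{1..n}. 0 < h i \<longrightarrow> (\<exists>j\<in>{1..n}. covers E h i j \<and> before xs j i)}"

definition fP :: "nat \<Rightarrow> nat set set \<Rightarrow> (nat \<Rightarrow> nat) \<Rightarrow> (nat \<Rightarrow> rat) \<Rightarrow> rat" where
  "fP n E h u = (\<Sum>xs\<in>gamma_orders n E h. iota xs u)"

text \<open>Introduce u_0 = -(u_1+...+u_n), permute u_0..u_n by sigma
  (a permutation of {0..n}) and re-express in u_1..u_n.\<close>
definition ext_u :: "nat \<Rightarrow> (nat \<Rightarrow> rat) \<Rightarrow> nat \<Rightarrow> rat" where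
  "ext_u n u i = (if i = 0 then - (\<Sum>k\<in>{1..n}. u k) else u i)"

definition mould_act :: "nat \<Rightarrow> (nat \<Rightarrow> nat) \<Rightarrow> ((nat \<Rightarrow> rat) \<Rightarrow> rat) \<Rightarrow> (nat \<Rightarrow> rat) \<Rightarrow> rat" where
  "mould_act n \<sigma> f u = f (\<lambda>i. ext_u n u (\<sigma> i))"

text \<open>Generic points: all nonempty subset sums of u_1..u_n are nonzero
  (equivalently all sums over nonempty proper subsets of {0..n} of u_0..u_n).
  Two rational functions whose denominators are products of such linear forms
  are equal in Q(u_1..u_n) iff they agree at all generic rational points.\<close>
definition generic :: "nat \<Rightarrow> (nat \<Rightarrow> rat) \<Rightarrow> bool" where
  "generic n u \<longleftrightarrow> (\<forall>S. S \<subseteq> {1..n} \<and> S \<noteq> {} \<longrightarrow> (\<Sum>k\<in>S. u k) \<noteq> 0)"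

end

theory Submission
  imports Defs "HOL-Combinatorics.Multiset_Permutations"
begin

text \<open>Add to the shrub a root \<open>0\<close> adjacent to all vertices of height 0. Then \<open>f\<^sub>P\<close> is the sum of
  \<open>iota\<close> over the orders of \<open>{1..n}\<close> in which every vertex is adjacent to the root or to an
  earlier vertex. Since the action of \<open>\<sigma>\<close> permutes \<open>u\<^sub>0, \<dots>, u\<^sub>n\<close> with \<open>u\<^sub>0 = -(u\<^sub>1 + \<dots> + u\<^sub>n)\<close>,
  it turns \<open>f\<^sub>P\<close> into the same kind of sum for the graph rooted at \<open>\<sigma>\<^sup>-\<^sup>1(0)\<close>, relabelled by \<open>\<sigma>\<close>.

  Two facts finish the proof. When the variables sum to zero, moving the root of a bipartite
  graph to a neighbour only changes the sign of the sum: an inclusion--exclusion over the vertices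
  overtaking the old root, followed by the shuffle identity for \<open>iota\<close>, matches the two sums
  term by term. And moving the root of a shrub to a neighbour \<open>k'\<close>, with the vertices above \<open>k'\<close>
  one level lower and all others one level higher, gives again a shrub. Moving the root step by
  step to \<open>\<sigma>\<^sup>-\<^sup>1(0)\<close> thus yields a shrub \<open>P'\<close> with \<open>\<sigma> \<cdot> f\<^sub>P = \<plusminus>f\<^sub>P\<^sub>'\<close>.\<close>

section \<open>Orders growing from a set of vertices\<close>

fun grows_from :: "('a \<Rightarrow> 'a \<Rightarrow> bool) \<Rightarrow> 'a set \<Rightarrow> 'a list \<Rightarrow> bool" where
  "grows_from adj A [] = True"
| "grows_from adj A (x # xs) \<longleftrightarrow> (\<exists>a\<in>A. adj a x) \<and> grows_from adj (insert x A) xs"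

lemma grows_from_append:
  "grows_from adj A (xs @ ys) \<longleftrightarrow> grows_from adj A xs \<and> grows_from adj (A \<union> set xs) ys"
  by (induction xs arbitrary: A) (auto simp: insert_commute)

lemma grows_from_snoc:
  "grows_from adj A (xs @ [y]) \<longleftrightarrow> grows_from adj A xs \<and> (\<exists>a\<in>A \<union> set xs. adj a y)"
  by (simp add: grows_from_append)

lemma grows_from_nth:
  "grows_from adj A xs \<longleftrightarrow> (\<forall>j<length xs. \<exists>a\<in>A \<union> set (take j xs). adj a (xs ! j))"
proof (induction xs arbitrary: A)
  case (Cons x xs)
  have "(\<forall>j<length (x # xs). \<exists>a\<in>A \<union> set (take j (x # xs)). adj a ((x # xs) ! j)) \<longleftrightarrow>
        (\<exists>a\<in>A. adj a x) \<and> (\<forall>j<length xs. \<exists>a\<in>insert x A \<union> set (take j xs). adj a (xs ! j))"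
    unfolding length_Cons All_less_Suc2 by simp
  then show ?case using Cons by simp
qed simp

lemma grows_from_map:
  assumes "\<And>x y. adj' (f x) (f y) \<longleftrightarrow> adj x y"
  shows "grows_from adj' (f ` A) (map f xs) \<longleftrightarrow> grows_from adj A xs"
proof (induction xs arbitrary: A)
  case (Cons x xs)
  have "(\<exists>a\<in>f ` A. adj' a (f x)) \<longleftrightarrow> (\<exists>a\<in>A. adj a x)" using assms by auto
  then show ?case using Cons[of "insert x A"] by simp
qed simp

lemma filter_Cons_notin:
  assumes "g \<notin> set xs" "P \<subseteq> set xs"
  shows "filter (\<lambda>x. x \<in> P) (g # xs) = filter (\<lambda>x. x \<in> P) xs"
    and "filter (\<lambda>x. x \<in> insert g P) (g # xs) = g # filter (\<lambda>x. x \<in> P) xs"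
    and "filter (\<lambda>x. x \<notin> P) (g # xs) = g # filter (\<lambda>x. x \<notin> P) xs"
    and "filter (\<lambda>x. x \<notin> insert g P) (g # xs) = filter (\<lambda>x. x \<notin> P) xs"
  using assms by (auto intro!: filter_cong)

lemma rev_eq_last_Cons:
  "xs \<noteq> [] \<Longrightarrow> rev xs = last xs # tl (rev xs)"
  by (metis hd_rev list.collapse rev_is_Nil_conv)

locale bicoloured_edge =
  fixes adj :: "'a \<Rightarrow> 'a \<Rightarrow> bool" and col :: "'a \<Rightarrow> bool" and r r' :: 'a
  assumes adj_sym: "adj x y \<Longrightarrow> adj y x"
    and adj_col: "adj x y \<Longrightarrow> col x \<noteq> col y"
    and edge: "adj r r'"
begin

definition blocked :: "'a set \<Rightarrow> 'a set" where
  "blocked R = {v. col v = col r \<and> (\<exists>x\<in>R. adj x v)}"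

definition admissible :: "'a set \<Rightarrow> 'a list \<Rightarrow> 'a set \<Rightarrow> bool" where
  "admissible R \<gamma> P \<longleftrightarrow> r' \<in> P \<and> P \<inter> blocked R = {} \<and> last (filter (\<lambda>x. x \<in> P) \<gamma>) = r'
     \<and> grows_from adj {r'} (tl (rev (filter (\<lambda>x. x \<in> P) \<gamma>)))
     \<and> grows_from adj (P \<union> R) (filter (\<lambda>x. x \<notin> P) \<gamma>)"

definition signed_term :: "'a set \<Rightarrow> 'a list \<Rightarrow> 'a set \<Rightarrow> int" where
  "signed_term R \<gamma> P = (if admissible R \<gamma> P then (-1) ^ (card P + 1) else 0)"

definition signed_count :: "'a set \<Rightarrow> 'a list \<Rightarrow> int" where
  "signed_count R \<gamma> = (\<Sum>P\<in>Pow (set \<gamma>). signed_term R \<gamma> P)"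

lemma r'_not_blocked: "r' \<notin> blocked R"
  using adj_col[OF edge] by (auto simp: blocked_def)

lemma signed_count_Cons:
  assumes "g \<notin> set \<gamma>"
  shows "signed_count R (g # \<gamma>) =
    (\<Sum>P\<in>Pow (set \<gamma>). signed_term R (g # \<gamma>) P + signed_term R (g # \<gamma>) (insert g P))"
proof -
  have "Pow (set (g # \<gamma>)) = Pow (set \<gamma>) \<union> insert g ` Pow (set \<gamma>)"
    by (simp add: Pow_insert)
  moreover have "Pow (set \<gamma>) \<inter> insert g ` Pow (set \<gamma>) = {}"
    and "inj_on (insert g) (Pow (set \<gamma>))"
    using assms by (auto simp: inj_on_def)
  ultimately show ?thesis
    unfolding signed_count_def by (simp add: sum.union_disjoint sum.reindex sum.distrib)
qed

lemma signed_count_Cons_r':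
  assumes "r \<in> R" "r' \<notin> set \<gamma>"
  shows "signed_count R (r' # \<gamma>) = (if grows_from adj R (r' # \<gamma>) then 1 else 0)"
proof -
  have pair_terms: "signed_term R (r' # \<gamma>) P + signed_term R (r' # \<gamma>) (insert r' P)
      = (if P = {} \<and> grows_from adj R (r' # \<gamma>) then 1 else 0)" if "P \<subseteq> set \<gamma>" for P
  proof -
    note filt = filter_Cons_notin[OF assms(2) that]
    have "\<not> admissible R (r' # \<gamma>) P"
      using that assms(2) by (auto simp: admissible_def)
    moreover have "\<not> admissible R (r' # \<gamma>) (insert r' P)" if "P \<noteq> {}"
    proof -
      have "filter (\<lambda>x. x \<in> P) \<gamma> \<noteq> []"
        using \<open>P \<subseteq> set \<gamma>\<close> \<open>P \<noteq> {}\<close> by (auto simp: filter_empty_conv)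
      then have "last (filter (\<lambda>x. x \<in> insert r' P) (r' # \<gamma>)) \<in> P"
        unfolding filt(2) using last_in_set by fastforce
      then show ?thesis using \<open>P \<subseteq> set \<gamma>\<close> assms(2) by (auto simp: admissible_def)
    qed
    moreover have "admissible R (r' # \<gamma>) {r'} \<longleftrightarrow> grows_from adj R (r' # \<gamma>)"
    proof -
      have "filter (\<lambda>x. x \<in> {r'}) (r' # \<gamma>) = [r']" "filter (\<lambda>x. x \<notin> {r'}) (r' # \<gamma>) = \<gamma>"
        using assms(2) by (auto simp: filter_empty_conv intro: filter_True)
      then show ?thesis using r'_not_blocked assms(1) edge by (auto simp: admissible_def)
    qed
    ultimately show ?thesis by (auto simp: signed_term_def)
  qed
  have "signed_count R (r' # \<gamma>)
      = (\<Sum>P\<in>Pow (set \<gamma>). if P = {} \<and> grows_from adj R (r' # \<gamma>) then 1 else 0)"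
    unfolding signed_count_Cons[OF assms(2)] by (intro sum.cong) (auto simp: pair_terms)
  also have "\<dots> = (if grows_from adj R (r' # \<gamma>) then 1 else 0)"
    by (simp add: sum.delta)
  finally show ?thesis .
qed

lemma signed_count_Cons_blocked:
  assumes "g \<notin> set \<gamma>" "g \<in> blocked R"
  shows "signed_count R (g # \<gamma>) = signed_count (insert g R) \<gamma>"
proof -
  have blocked_insert: "P \<inter> blocked (insert g R) = P \<inter> blocked R" for P
    using assms(2) adj_col by (auto simp: blocked_def)
  have "\<exists>a\<in>R. adj a g" using assms(2) by (auto simp: blocked_def)
  then have "signed_term R (g # \<gamma>) P + signed_term R (g # \<gamma>) (insert g P)
      = signed_term (insert g R) \<gamma> P" if "P \<subseteq> set \<gamma>" for P
    using assms filter_Cons_notin[OF assms(1) that] blocked_insert[of P]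
    by (auto simp: signed_term_def admissible_def Un_insert_right)
  then have "signed_count R (g # \<gamma>) = (\<Sum>P\<in>Pow (set \<gamma>). signed_term (insert g R) \<gamma> P)"
    unfolding signed_count_Cons[OF assms(1)] by (intro sum.cong) auto
  then show ?thesis by (simp add: signed_count_def)
qed

lemma signed_count_Cons_unblocked:
  assumes "g \<notin> set \<gamma>" "g \<noteq> r'" "g \<notin> blocked R"
  shows "signed_count R (g # \<gamma>) =
    (if \<exists>a\<in>R. adj a g then signed_count (insert g R) \<gamma> else 0)"
proof -
  have pair_terms: "signed_term R (g # \<gamma>) P + signed_term R (g # \<gamma>) (insert g P)
      = (if \<exists>a\<in>R. adj a g then signed_term (insert g R) \<gamma> P else 0)" if "P \<subseteq> set \<gamma>" for P
  proof (cases "r' \<in> P")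
    case False
    then show ?thesis using assms(2) by (auto simp: signed_term_def admissible_def)
  next
    case True
    define f where "f = filter (\<lambda>x. x \<in> P) \<gamma>"
    define q where "q = filter (\<lambda>x. x \<notin> P) \<gamma>"
    have "set f = P" using that by (auto simp: f_def)
    then have "f \<noteq> []" using True by auto
    have "g \<notin> P" using that assms(1) by blast
    moreover have "finite P" using that finite_subset by blast
    ultimately have sign: "(-1::int) ^ (card (insert g P) + 1) = - ((-1) ^ (card P + 1))"
      by simp
    note filt = filter_Cons_notin[OF assms(1) that, folded f_def q_def]
    have without_g: "admissible R (g # \<gamma>) P \<longleftrightarrow> P \<inter> blocked R = {} \<and> last f = r'
        \<and> grows_from adj {r'} (tl (rev f)) \<and> (\<exists>a\<in>P \<union> R. adj a g)
        \<and> grows_from adj (insert g (P \<union> R)) q"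
      unfolding admissible_def filt(1,3) using True by simp
    have with_g: "admissible R (g # \<gamma>) (insert g P) \<longleftrightarrow> P \<inter> blocked R = {} \<and> last f = r'
        \<and> grows_from adj {r'} (tl (rev f)) \<and> (\<exists>a\<in>P. adj a g)
        \<and> grows_from adj (insert g (P \<union> R)) q"
    proof -
      have "last f = r' \<Longrightarrow> insert r' (set (tl (rev f))) = P"
        using rev_eq_last_Cons[OF \<open>f \<noteq> []\<close>] \<open>set f = P\<close> by (metis list.simps(15) set_rev)
      moreover have "tl (rev (g # f)) = tl (rev f) @ [g]"
        using \<open>f \<noteq> []\<close> by (cases "rev f") auto
      ultimately show ?thesis
        unfolding admissible_def filt(2,4) using True assms(3) \<open>f \<noteq> []\<close>
        by (auto simp: grows_from_snoc)
    qed
    have extended: "admissible (insert g R) \<gamma> P \<longleftrightarrow> P \<inter> blocked R = {} \<and> \<not> (\<exists>a\<in>P. adj a g)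
        \<and> last f = r' \<and> grows_from adj {r'} (tl (rev f)) \<and> grows_from adj (insert g (P \<union> R)) q"
      if "\<exists>a\<in>R. adj a g"
    proof -
      have "col g \<noteq> col r" using assms(3) that by (auto simp: blocked_def)
      then have "blocked (insert g R) = blocked R \<union> {v. adj g v}"
        using adj_col by (auto simp: blocked_def)
      then show ?thesis using True adj_sym by (auto simp: admissible_def f_def q_def)
    qed
    show ?thesis
      using without_g with_g extended sign by (auto simp: signed_term_def)
  qed
  have "signed_count R (g # \<gamma>) =
      (\<Sum>P\<in>Pow (set \<gamma>). if \<exists>a\<in>R. adj a g then signed_term (insert g R) \<gamma> P else 0)"
    unfolding signed_count_Cons[OF assms(1)] by (intro sum.cong) (auto simp: pair_terms)
  then show ?thesis by (simp add: signed_count_def)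
qed

text \<open>Inclusion--exclusion over the set \<open>P \<ni> r'\<close> of vertices that precede \<open>r\<close> once the
  root has moved from \<open>r\<close> to \<open>r'\<close>; the bicolouring makes the blocked vertices harmless.\<close>

theorem grows_from_signed_count:
  assumes "r \<in> R" "distinct \<gamma>" "set \<gamma> \<inter> R = {}" "r' \<in> set \<gamma>"
  shows "(if grows_from adj R \<gamma> then 1 else 0) = signed_count R \<gamma>"
  using assms
proof (induction \<gamma> arbitrary: R)
  case (Cons g \<gamma>)
  then have g: "g \<notin> set \<gamma>" by simp
  consider "g = r'" | "g \<noteq> r'" "g \<in> blocked R" | "g \<noteq> r'" "g \<notin> blocked R" by blast
  then show ?case
  proof cases
    case 1
    then show ?thesis using signed_count_Cons_r' Cons.prems g by simp
  next
    case 2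
    then have "\<exists>a\<in>R. adj a g" by (auto simp: blocked_def)
    then show ?thesis
      using 2 Cons.prems Cons.IH[of "insert g R"] signed_count_Cons_blocked[OF g] by auto
  next
    case 3
    then show ?thesis
      using Cons.prems Cons.IH[of "insert g R"] signed_count_Cons_unblocked[OF g] by auto
  qed
qed simp

end

section \<open>The embedding \<open>iota\<close> on shuffles\<close>

lemma iota_Nil [simp]: "iota [] u = 1"
  by (simp add: iota_def)

lemma iota_Cons: "iota (x # xs) u = iota xs u / (\<Sum>j\<in>set (x # xs). u j)"
  unfolding iota_def using prod.lessThan_Suc_shift[of "\<lambda>k. \<Sum>j\<in>set (drop k (x # xs)). u j"]
  by (simp del: set_simps)

lemma iota_cong: "(\<And>x. x \<in> set xs \<Longrightarrow> u x = v x) \<Longrightarrow> iota xs u = iota xs v"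
  unfolding iota_def by (intro arg_cong[where f = "\<lambda>p. 1 / p"] prod.cong sum.cong refl)
    (meson in_set_dropD)

lemma iota_map: "inj f \<Longrightarrow> iota (map f xs) u = iota xs (u \<circ> f)"
  unfolding iota_def
  by (simp add: drop_map sum.reindex inj_on_subset[of f UNIV])

lemma iota_append:
  assumes "distinct (xs @ ys)"
  shows "iota (xs @ ys) u
    = iota ys u / (\<Prod>k<length xs. (\<Sum>j\<in>set (drop k xs). u j) + (\<Sum>j\<in>set ys. u j))"
  using assms
proof (induction xs)
  case (Cons x xs)
  have "(\<Sum>j\<in>set (x # xs @ ys). u j) = (\<Sum>j\<in>set (x # xs). u j) + (\<Sum>j\<in>set ys. u j)"
    using Cons.prems by (subst sum.union_disjoint[symmetric]) auto
  then show ?case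
    using Cons iota_Cons[of x "xs @ ys" u]
      prod.lessThan_Suc_shift[of "\<lambda>k. (\<Sum>j\<in>set (drop k (x # xs)). u j) + (\<Sum>j\<in>set ys. u j)"]
    by (simp del: set_simps add: mult.commute)
qed simp

lemma iota_rev: "iota (rev xs) u = 1 / (\<Prod>k<length xs. \<Sum>j\<in>set (take (Suc k) xs). u j)"
proof -
  let ?g = "\<lambda>k. \<Sum>j\<in>set (take (Suc k) xs). u j"
  have "(\<Prod>k<length xs. \<Sum>j\<in>set (drop k (rev xs)). u j) = (\<Prod>k<length xs. ?g (length xs - Suc k))"
    by (intro prod.cong refl) (simp add: drop_rev Suc_diff_Suc)
  also have "\<dots> = (\<Prod>k<length xs. ?g k)"
    by (rule prod.nat_diff_reindex)
  finally show ?thesis by (simp add: iota_def)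
qed

text \<open>The shuffle product of the Zinbiel operad, read through \<open>iota\<close>.\<close>

lemma iota_shuffles:
  fixes u :: "nat \<Rightarrow> rat"
  assumes "distinct xs" "distinct ys" "set xs \<inter> set ys = {}"
    and "\<And>S. S \<subseteq> set xs \<union> set ys \<Longrightarrow> S \<noteq> {} \<Longrightarrow> sum u S \<noteq> 0"
  shows "(\<Sum>zs\<in>shuffles xs ys. iota zs u) = iota xs u * iota ys u"
  using assms
proof (induction xs ys rule: shuffles.induct)
  case (3 a xs b ys)
  define s where "s = (\<Sum>j\<in>set (a # xs). u j)"
  define t where "t = (\<Sum>j\<in>set (b # ys). u j)"
  have st: "(\<Sum>j\<in>set (a # xs) \<union> set (b # ys). u j) = s + t"
    unfolding s_def t_def using "3.prems"(3) by (intro sum.union_disjoint) auto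
  have "s \<noteq> 0" "t \<noteq> 0" "s + t \<noteq> 0"
    using "3.prems"(4)[of "set (a # xs)"] "3.prems"(4)[of "set (b # ys)"]
      "3.prems"(4)[of "set (a # xs) \<union> set (b # ys)"] st
    by (auto simp: s_def t_def)
  have ia: "iota (a # xs) u = iota xs u / s" and ib: "iota (b # ys) u = iota ys u / t"
    unfolding s_def t_def by (rule iota_Cons)+
  have IH1: "(\<Sum>zs\<in>shuffles xs (b # ys). iota zs u) = iota xs u * iota (b # ys) u"
    using "3.prems" by (intro "3.IH"(1)) auto
  have IH2: "(\<Sum>zs\<in>shuffles (a # xs) ys. iota zs u) = iota (a # xs) u * iota ys u"
    using "3.prems" by (intro "3.IH"(2)) auto
  have "(\<Sum>zs\<in>shuffles (a # xs) (b # ys). iota zs u)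
      = (\<Sum>zs\<in>shuffles xs (b # ys). iota (a # zs) u) + (\<Sum>zs\<in>shuffles (a # xs) ys. iota (b # zs) u)"
  proof -
    have "(#) a ` shuffles xs (b # ys) \<inter> (#) b ` shuffles (a # xs) ys = {}"
      using "3.prems"(3) by auto
    then show ?thesis by (simp add: sum.union_disjoint sum.reindex)
  qed
  also have "\<dots> = (\<Sum>zs\<in>shuffles xs (b # ys). iota zs u) / (s + t)
      + (\<Sum>zs\<in>shuffles (a # xs) ys. iota zs u) / (s + t)"
  proof -
    have "set (a # zs) = set (a # xs) \<union> set (b # ys)" if "zs \<in> shuffles xs (b # ys)" for zs
      using set_shuffles[OF that] by auto
    moreover have "set (b # zs) = set (a # xs) \<union> set (b # ys)" if "zs \<in> shuffles (a # xs) ys" for zs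
      using set_shuffles[OF that] by auto
    ultimately show ?thesis
      by (simp add: iota_Cons st sum_divide_distrib cong: sum.cong del: set_simps)
  qed
  also have "\<dots> = (iota xs u * (iota ys u / t) + iota xs u / s * iota ys u) / (s + t)"
    by (simp add: IH1 IH2 ia ib add_divide_distrib)
  also have "\<dots> = iota xs u / s * (iota ys u / t)"
  proof -
    have "iota xs u * (iota ys u / t) + iota xs u / s * iota ys u
        = iota xs u * iota ys u * (s + t) / (s * t)"
      using \<open>s \<noteq> 0\<close> \<open>t \<noteq> 0\<close> by (simp add: field_simps)
    then show ?thesis using \<open>s + t \<noteq> 0\<close> by simp
  qed
  finally show ?case by (simp add: ia ib)
qed auto

lemma permutations_of_set_fibre:
  assumes "P \<subseteq> W" "xs \<in> permutations_of_set P" "ys \<in> permutations_of_set (W - P)"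
  shows "{zs \<in> permutations_of_set W. filter (\<lambda>x. x \<in> P) zs = xs \<and> filter (\<lambda>x. x \<notin> P) zs = ys}
    = shuffles xs ys"
proof -
  have xs: "set xs = P" "distinct xs" and ys: "set ys = W - P" "distinct ys"
    using assms(2,3) by (auto dest: permutations_of_setD)
  have disj: "set xs \<inter> set ys = {}" using xs ys by auto
  show ?thesis
  proof (intro set_eqI iffI)
    fix zs assume "zs \<in> shuffles xs ys"
    then show "zs \<in> {zs \<in> permutations_of_set W. filter (\<lambda>x. x \<in> P) zs = xs \<and> filter (\<lambda>x. x \<notin> P) zs = ys}"
      using filter_shuffles_disjoint1[OF disj] distinct_disjoint_shuffles[OF xs(2) ys(2) disj]
        set_shuffles[of zs xs ys] xs ys assms(1)
      by (auto intro!: permutations_of_setI)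
  qed (use partition_in_shuffles in auto)
qed

text \<open>When the variables of a permutation sum to zero, the suffix sums of an order
  \<open>xs @ r # ys\<close> turn into prefix sums of \<open>r' # xs\<close> up to sign.\<close>

lemma iota_zero_sum_split:
  fixes u :: "nat \<Rightarrow> rat"
  assumes d: "distinct (r' # xs @ r # ys)" and z: "(\<Sum>j\<in>set (r' # xs @ r # ys). u j) = 0"
  shows "iota (xs @ r # ys) u = (-1) ^ Suc (length xs) * (iota (rev (r' # xs)) u * iota ys u)"
proof -
  let ?x = "\<lambda>k. \<Sum>j\<in>set (take (Suc k) (r' # xs)). u j"
  have suffix: "(\<Sum>j\<in>set (drop k (xs @ [r])). u j) + (\<Sum>j\<in>set ys. u j) = - ?x k"
    if "k < Suc (length xs)" for k
  proof -
    have split: "take (Suc k) (r' # xs) @ drop k (xs @ [r]) @ ys = r' # xs @ r # ys"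
    proof -
      have "take (Suc k) (r' # xs) @ drop k (xs @ [r]) @ ys = r' # (take k xs @ drop k xs) @ r # ys"
        using that by simp
      then show ?thesis by (simp only: append_take_drop_id)
    qed
    have "0 = (\<Sum>j\<in>set (take (Suc k) (r' # xs) @ drop k (xs @ [r]) @ ys). u j)"
      using z by (simp only: split)
    also have "\<dots> = ?x k + ((\<Sum>j\<in>set (drop k (xs @ [r])). u j) + (\<Sum>j\<in>set ys. u j))"
    proof -
      have "set (take (Suc k) (r' # xs)) \<inter> (set (drop k (xs @ [r])) \<union> set ys) = {}"
        "set (drop k (xs @ [r])) \<inter> set ys = {}"
        using d unfolding split[symmetric] distinct_append set_append by blast+
      note dj = this
      show ?thesis unfolding set_append
        by (subst sum.union_disjoint[OF _ _ dj(1)], simp, simp,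
            subst sum.union_disjoint[OF _ _ dj(2)], simp_all)
    qed
    finally show ?thesis by (simp add: algebra_simps)
  qed
  have "iota (xs @ r # ys) u = iota ((xs @ [r]) @ ys) u" by simp
  also have "\<dots> = iota ys u
      / (\<Prod>k<length (xs @ [r]). (\<Sum>j\<in>set (drop k (xs @ [r])). u j) + (\<Sum>j\<in>set ys. u j))"
    using d by (intro iota_append) simp
  also have "\<dots> = iota ys u / (\<Prod>k<Suc (length xs). - ?x k)"
    using suffix by simp
  also have "\<dots> = (-1) ^ Suc (length xs) * (iota (rev (r' # xs)) u * iota ys u)"
    unfolding iota_rev prod_uminus card_lessThan
    by (cases "even (length xs)") (simp_all add: field_simps)
  finally show ?thesis .
qed

section \<open>Rooted sums and moving the root\<close>

definition rooted_sum :: "(nat \<Rightarrow> nat \<Rightarrow> bool) \<Rightarrow> nat set \<Rightarrow> nat \<Rightarrow> (nat \<Rightarrow> rat) \<Rightarrow> rat" where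
  "rooted_sum adj V k u =
     (\<Sum>xs\<in>permutations_of_set (V - {k}). if grows_from adj {k} xs then iota xs u else 0)"

definition balanced_generic :: "nat set \<Rightarrow> (nat \<Rightarrow> rat) \<Rightarrow> bool" where
  "balanced_generic V u \<longleftrightarrow> sum u V = 0 \<and> (\<forall>S\<subseteq>V. S \<noteq> {} \<longrightarrow> S \<noteq> V \<longrightarrow> sum u S \<noteq> 0)"

text \<open>The order \<open>tl (rev xs) @ r # ys\<close> rooted at \<open>r'\<close>, described through its pieces
  \<open>P = set xs\<close> and \<open>ys\<close> (see \<open>rooted_sum_split_at\<close>).\<close>

definition reroot_sign :: "('a \<Rightarrow> 'a \<Rightarrow> bool) \<Rightarrow> 'a \<Rightarrow> 'a \<Rightarrow> 'a set \<Rightarrow> 'a list \<Rightarrow> 'a list \<Rightarrow> rat" where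
  "reroot_sign adj r r' P xs ys =
     (if r' \<in> P \<and> last xs = r' \<and> grows_from adj {r'} (tl (rev xs)) \<and> grows_from adj (P \<union> {r}) ys
      then (-1) ^ card P else 0)"

lemma (in bicoloured_edge) grows_from_root_reroot_sign:
  assumes "distinct \<gamma>" "r \<notin> set \<gamma>" "r' \<in> set \<gamma>"
  shows "(if grows_from adj {r} \<gamma> then 1 else 0) =
    - (\<Sum>P\<in>Pow (set \<gamma>). reroot_sign adj r r' P (filter (\<lambda>x. x \<in> P) \<gamma>) (filter (\<lambda>x. x \<notin> P) \<gamma>))"
proof -
  have "blocked {r} = {}" using adj_col by (auto simp: blocked_def)
  then have "of_int (signed_term {r} \<gamma> P)
      = - reroot_sign adj r r' P (filter (\<lambda>x. x \<in> P) \<gamma>) (filter (\<lambda>x. x \<notin> P) \<gamma>)" for P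
    by (simp add: signed_term_def admissible_def reroot_sign_def)
  moreover have "(if grows_from adj {r} \<gamma> then 1 else 0) = (of_int (signed_count {r} \<gamma>) :: rat)"
    using grows_from_signed_count[of "{r}" \<gamma>] assms by (simp split: if_splits)
  ultimately show ?thesis by (simp add: signed_count_def sum_negf)
qed

lemma sum_permutations_of_set_by_filter:
  fixes u :: "nat \<Rightarrow> rat"
  assumes "P \<subseteq> W" "\<And>S. S \<subseteq> W \<Longrightarrow> S \<noteq> {} \<Longrightarrow> sum u S \<noteq> 0"
  shows "(\<Sum>zs\<in>permutations_of_set W. c (filter (\<lambda>x. x \<in> P) zs) (filter (\<lambda>x. x \<notin> P) zs) * iota zs u)
    = (\<Sum>(xs, ys)\<in>permutations_of_set P \<times> permutations_of_set (W - P). c xs ys * (iota xs u * iota ys u))"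
proof -
  let ?split = "\<lambda>zs. (filter (\<lambda>x. x \<in> P) zs, filter (\<lambda>x. x \<notin> P) zs)"
  let ?F = "\<lambda>zs. c (filter (\<lambda>x. x \<in> P) zs) (filter (\<lambda>x. x \<notin> P) zs) * iota zs u"
  have fibre: "(\<Sum>zs\<in>{zs \<in> permutations_of_set W. ?split zs = (xs, ys)}. ?F zs)
      = c xs ys * (iota xs u * iota ys u)"
    if "xs \<in> permutations_of_set P" "ys \<in> permutations_of_set (W - P)" for xs ys
  proof -
    have xs: "set xs = P" "distinct xs" and ys: "set ys = W - P" "distinct ys"
      using that by (auto dest: permutations_of_setD)
    then have disj: "set xs \<inter> set ys = {}" by auto
    have "(\<Sum>zs\<in>{zs \<in> permutations_of_set W. ?split zs = (xs, ys)}. ?F zs)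
        = (\<Sum>zs\<in>shuffles xs ys. c xs ys * iota zs u)"
      using permutations_of_set_fibre[OF assms(1) that] filter_shuffles_disjoint1[OF disj] xs(1)
      by (intro sum.cong) auto
    also have "\<dots> = c xs ys * (iota xs u * iota ys u)"
    proof -
      have "set xs \<union> set ys = W" using xs ys assms(1) by auto
      then have "(\<Sum>zs\<in>shuffles xs ys. iota zs u) = iota xs u * iota ys u"
        using xs(2) ys(2) disj assms(2) by (intro iota_shuffles) auto
      then show ?thesis by (simp add: sum_distrib_left[symmetric])
    qed
    finally show ?thesis .
  qed
  have "?split ` permutations_of_set W \<subseteq> permutations_of_set P \<times> permutations_of_set (W - P)"
    using assms(1) by (auto simp: permutations_of_set_def)
  then have "(\<Sum>zs\<in>permutations_of_set W. ?F zs)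
      = (\<Sum>p\<in>permutations_of_set P \<times> permutations_of_set (W - P).
           \<Sum>zs\<in>{zs \<in> permutations_of_set W. ?split zs = p}. ?F zs)"
    by (intro sum.group[symmetric]) auto
  also have "\<dots> = (\<Sum>(xs, ys)\<in>permutations_of_set P \<times> permutations_of_set (W - P).
      c xs ys * (iota xs u * iota ys u))"
    using fibre by (intro sum.cong) auto
  finally show ?thesis .
qed

lemma bij_betw_split_at:
  assumes "r \<in> V" "r' \<in> V" "r \<noteq> r'"
  shows "bij_betw (\<lambda>(xs, ys). xs @ r # ys) {(xs, ys). r' # xs @ r # ys \<in> permutations_of_set V}
    (permutations_of_set (V - {r'}))"
  (is "bij_betw _ ?A _")
proof (rule bij_betw_imageI)
  show "inj_on (\<lambda>(xs, ys). xs @ r # ys) ?A"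
  proof (intro inj_onI, clarify)
    fix xs ys xs' ys'
    assume "r' # xs' @ r # ys' \<in> permutations_of_set V" "xs @ r # ys = xs' @ r # ys'"
    then show "xs = xs' \<and> ys = ys'"
      using append_Cons_eq_iff[of r xs' ys' xs ys] by (auto dest: permutations_of_setD)
  qed
  show "(\<lambda>(xs, ys). xs @ r # ys) ` ?A = permutations_of_set (V - {r'})"
  proof (intro equalityI subsetI)
    fix zs assume "zs \<in> (\<lambda>(xs, ys). xs @ r # ys) ` ?A"
    then show "zs \<in> permutations_of_set (V - {r'})"
      by (auto simp: permutations_of_set_def)
  next
    fix zs assume zs: "zs \<in> permutations_of_set (V - {r'})"
    then have "r \<in> set zs" using assms(1,3) by (auto dest: permutations_of_setD)
    then obtain xs ys where "zs = xs @ r # ys" using split_list by metis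
    moreover have "r' # zs \<in> permutations_of_set V"
      using zs assms(2,3) by (auto simp: permutations_of_set_def)
    ultimately show "zs \<in> (\<lambda>(xs, ys). xs @ r # ys) ` ?A"
      by (intro image_eqI[where x = "(xs, ys)"]) auto
  qed
qed

lemma rooted_sum_split_at:
  fixes u :: "nat \<Rightarrow> rat"
  assumes "r \<in> V" "r' \<in> V" "r \<noteq> r'" "adj r' r" "sum u V = 0"
  shows "rooted_sum adj V r' u =
    (\<Sum>(xs, ys)\<in>{(xs, ys). r' # xs @ r # ys \<in> permutations_of_set V}.
       reroot_sign adj r r' (set (r' # xs)) (rev (r' # xs)) ys * (iota (rev (r' # xs)) u * iota ys u))"
proof -
  let ?A = "{(xs, ys). r' # xs @ r # ys \<in> permutations_of_set V}"
  have "bij_betw (\<lambda>(xs, ys). xs @ r # ys) ?A (permutations_of_set (V - {r'}))"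
    using assms(1-3) by (rule bij_betw_split_at)
  then have "rooted_sum adj V r' u = (\<Sum>(xs, ys)\<in>?A.
      if grows_from adj {r'} (xs @ r # ys) then iota (xs @ r # ys) u else 0)"
    unfolding rooted_sum_def by (simp only: sum.reindex_bij_betw[symmetric] split_def)
  also have "\<dots> = (\<Sum>(xs, ys)\<in>?A. reroot_sign adj r r' (set (r' # xs)) (rev (r' # xs)) ys
      * (iota (rev (r' # xs)) u * iota ys u))"
  proof (intro sum.cong refl, clarify)
    fix xs ys assume A: "r' # xs @ r # ys \<in> permutations_of_set V"
    have d: "distinct (r' # xs @ r # ys)" and s: "set (r' # xs @ r # ys) = V"
      using permutations_of_setD[OF A] by simp_all
    have "grows_from adj {r'} (xs @ r # ys) \<longleftrightarrow>
        grows_from adj {r'} xs \<and> grows_from adj (set (r' # xs) \<union> {r}) ys"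
      using assms(4) by (auto simp: grows_from_append insert_commute)
    moreover have "card (set (r' # xs)) = Suc (length xs)"
      using d by (simp add: distinct_card)
    moreover have "iota (xs @ r # ys) u = (-1) ^ Suc (length xs) * (iota (rev (r' # xs)) u * iota ys u)"
      using d assms(5) s by (intro iota_zero_sum_split) auto
    ultimately show "(if grows_from adj {r'} (xs @ r # ys) then iota (xs @ r # ys) u else 0)
      = reroot_sign adj r r' (set (r' # xs)) (rev (r' # xs)) ys * (iota (rev (r' # xs)) u * iota ys u)"
      by (simp add: reroot_sign_def)
  qed
  finally show ?thesis .
qed

lemma bij_betw_split_at_triples:
  assumes "r \<in> V"
  shows "bij_betw (\<lambda>(xs, ys). (set (r' # xs), rev (r' # xs), ys))
    {(xs, ys). r' # xs @ r # ys \<in> permutations_of_set V}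
    {(P, xs, ys) \<in> Sigma (Pow (V - {r})) (\<lambda>P. permutations_of_set P \<times> permutations_of_set (V - {r} - P)).
       r' \<in> P \<and> last xs = r'}"
  (is "bij_betw ?k ?A ?T")
proof (rule bij_betw_imageI)
  show "inj_on ?k ?A" by (auto simp: inj_on_def)
  show "?k ` ?A = ?T"
  proof (intro equalityI subsetI)
    fix t assume "t \<in> ?k ` ?A"
    then obtain xs ys where "t = (set (r' # xs), rev (r' # xs), ys)"
      "r' # xs @ r # ys \<in> permutations_of_set V" by auto
    then show "t \<in> ?T" by (auto simp: permutations_of_set_def)
  next
    fix t assume "t \<in> ?T"
    then obtain P f q where t: "t = (P, f, q)" "P \<subseteq> V - {r}" "r' \<in> P" "last f = r'"
      and fq: "f \<in> permutations_of_set P" "q \<in> permutations_of_set (V - {r} - P)"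
      by auto
    have f: "set f = P" "distinct f" and q: "set q = V - {r} - P" "distinct q"
      using permutations_of_setD[OF fq(1)] permutations_of_setD[OF fq(2)] by simp_all
    have "f \<noteq> []" using f(1) t(3) by auto
    have rev_f: "rev f = r' # tl (rev f)"
      using rev_eq_last_Cons[OF \<open>f \<noteq> []\<close>] unfolding t(4) .
    have f_rev: "f = rev (r' # tl (rev f))"
      by (simp only: rev_f[symmetric] rev_rev_ident)
    have "set (r' # tl (rev f)) = P" "distinct (r' # tl (rev f))"
      using f by (simp_all only: rev_f[symmetric] set_rev distinct_rev)
    then have "r' # tl (rev f) @ r # q \<in> permutations_of_set V"
      using t(2) q assms by (auto simp: permutations_of_set_def)
    then show "t \<in> ?k ` ?A"
      using t(1) f_rev \<open>set (r' # tl (rev f)) = P\<close> by (auto intro!: image_eqI)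
  qed
qed

lemma split_at_sum_as_Sigma:
  fixes u :: "nat \<Rightarrow> rat"
  assumes "finite V" "r \<in> V"
  shows "(\<Sum>(xs, ys)\<in>{(xs, ys). r' # xs @ r # ys \<in> permutations_of_set V}.
       reroot_sign adj r r' (set (r' # xs)) (rev (r' # xs)) ys * (iota (rev (r' # xs)) u * iota ys u))
    = (\<Sum>(P, xs, ys)\<in>Sigma (Pow (V - {r})) (\<lambda>P. permutations_of_set P \<times> permutations_of_set (V - {r} - P)).
       reroot_sign adj r r' P xs ys * (iota xs u * iota ys u))"
proof -
  let ?A = "{(xs, ys). r' # xs @ r # ys \<in> permutations_of_set V}"
  let ?S = "Sigma (Pow (V - {r})) (\<lambda>P. permutations_of_set P \<times> permutations_of_set (V - {r} - P))"
  let ?T = "{(P, xs, ys) \<in> ?S. r' \<in> P \<and> last xs = r'}"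
  let ?G = "\<lambda>(P, xs, ys). reroot_sign adj r r' P xs ys * (iota xs u * iota ys u)"
  let ?k = "\<lambda>(xs, ys). (set (r' # xs), rev (r' # xs), ys)"
  have "(\<Sum>p\<in>?A. ?G (?k p)) = sum ?G ?T"
    using bij_betw_split_at_triples[OF assms(2)] by (rule sum.reindex_bij_betw)
  also have "\<dots> = sum ?G ?S"
    using assms(1) by (intro sum.mono_neutral_left) (auto simp: reroot_sign_def split: if_splits)
  finally show ?thesis by (simp add: split_def)
qed

theorem rooted_sum_reroot:
  assumes "bicoloured_edge adj col r r'" "finite V" "r \<in> V" "r' \<in> V" "balanced_generic V u"
  shows "rooted_sum adj V r' u = - rooted_sum adj V r u"
proof -
  interpret bicoloured_edge adj col r r' by (fact assms(1))
  have "r \<noteq> r'" using adj_col[OF edge] by auto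
  let ?W = "V - {r}"
  let ?c = "\<lambda>P xs ys. reroot_sign adj r r' P xs ys"
  have gen: "sum u S \<noteq> 0" if "S \<subseteq> ?W" "S \<noteq> {}" for S
    using assms(3,5) that by (auto simp: balanced_generic_def)
  have "- rooted_sum adj V r u = (\<Sum>zs\<in>permutations_of_set ?W. \<Sum>P\<in>Pow ?W.
      ?c P (filter (\<lambda>x. x \<in> P) zs) (filter (\<lambda>x. x \<notin> P) zs) * iota zs u)"
    unfolding rooted_sum_def sum_negf[symmetric]
  proof (intro sum.cong refl)
    fix zs assume "zs \<in> permutations_of_set ?W"
    then have "set zs = ?W" "distinct zs" by (auto dest: permutations_of_setD)
    then show "- (if grows_from adj {r} zs then iota zs u else 0) = (\<Sum>P\<in>Pow ?W.
        ?c P (filter (\<lambda>x. x \<in> P) zs) (filter (\<lambda>x. x \<notin> P) zs) * iota zs u)"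
      using grows_from_root_reroot_sign[of zs] assms(4) \<open>r \<noteq> r'\<close>
      by (auto simp: sum_distrib_right[symmetric] split: if_splits)
  qed
  also have "\<dots> = (\<Sum>P\<in>Pow ?W. \<Sum>zs\<in>permutations_of_set ?W.
      ?c P (filter (\<lambda>x. x \<in> P) zs) (filter (\<lambda>x. x \<notin> P) zs) * iota zs u)"
    by (rule sum.swap)
  also have "\<dots> = (\<Sum>P\<in>Pow ?W. \<Sum>(xs, ys)\<in>permutations_of_set P \<times> permutations_of_set (?W - P).
      ?c P xs ys * (iota xs u * iota ys u))"
    using gen by (intro sum.cong refl sum_permutations_of_set_by_filter) auto
  also have "\<dots> = (\<Sum>(P, xs, ys)\<in>Sigma (Pow ?W) (\<lambda>P. permutations_of_set P \<times> permutations_of_set (?W - P)).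
      ?c P xs ys * (iota xs u * iota ys u))"
    using assms(2) by (subst sum.Sigma) (auto simp: case_prod_beta)
  also have "\<dots> = rooted_sum adj V r' u"
  proof -
    have "sum u V = 0" using assms(5) by (simp add: balanced_generic_def)
    from rooted_sum_split_at[where adj = adj, OF assms(3,4) \<open>r \<noteq> r'\<close> adj_sym[OF edge] this]
      split_at_sum_as_Sigma[OF assms(2,3)]
    show ?thesis by (rule trans[symmetric])
  qed
  finally show ?thesis by simp
qed

section \<open>Rooted shrubs and moving the root\<close>

definition covering :: "('a \<Rightarrow> 'a \<Rightarrow> bool) \<Rightarrow> ('a \<Rightarrow> nat) \<Rightarrow> 'a \<Rightarrow> 'a \<Rightarrow> bool" where
  "covering adj dep x y \<longleftrightarrow> adj x y \<and> dep x = dep y + 1"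

text \<open>Models the graph of a shrub together with an added root \<open>k\<close> adjacent to the vertices of
  height 0; \<open>dep\<close> is the height plus one.\<close>

locale rooted_shrub =
  fixes adj :: "'a \<Rightarrow> 'a \<Rightarrow> bool" and V :: "'a set" and k :: 'a and dep :: "'a \<Rightarrow> nat"
  assumes finite_V: "finite V"
    and root_in_V: "k \<in> V"
    and dep_root: "dep k = 0"
    and dep_pos: "x \<in> V \<Longrightarrow> x \<noteq> k \<Longrightarrow> 0 < dep x"
    and adj_in_V: "adj x y \<Longrightarrow> x \<in> V \<and> y \<in> V"
    and adj_sym: "adj x y \<Longrightarrow> adj y x"
    and adj_dep: "adj x y \<Longrightarrow> dep x = dep y + 1 \<or> dep y = dep x + 1"
    and covers_some: "x \<in> V \<Longrightarrow> x \<noteq> k \<Longrightarrow> \<exists>y. covering adj dep x y"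
    and ax3: "distinct [a, b, c, d] \<Longrightarrow> covering adj dep a b \<Longrightarrow> covering adj dep a c
      \<Longrightarrow> covering adj dep c d \<Longrightarrow> adj b d"
    and ax4: "distinct [a, b, c, d, e] \<Longrightarrow> covering adj dep a c \<Longrightarrow> covering adj dep a d
      \<Longrightarrow> covering adj dep b d \<Longrightarrow> covering adj dep b e \<Longrightarrow> adj a e \<or> adj b c"
begin

abbreviation cov :: "'a \<Rightarrow> 'a \<Rightarrow> bool" where
  "cov \<equiv> covering adj dep"

lemma adj_dep_zero: "adj x y \<Longrightarrow> dep x = 0 \<Longrightarrow> x = k"
  using dep_pos adj_in_V by fastforce

lemma cov_dep_zero: "cov x y \<Longrightarrow> dep y = 0 \<Longrightarrow> y = k"
  using adj_dep_zero adj_sym unfolding covering_def by blast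

lemma dep_one_adj_root: "adj x y \<Longrightarrow> dep x = 1 \<Longrightarrow> adj x k"
proof -
  assume "adj x y" "dep x = 1"
  then have "x \<in> V" "x \<noteq> k" using adj_in_V dep_root by auto
  then obtain z where "cov x z" using covers_some by blast
  then show "adj x k" using cov_dep_zero \<open>dep x = 1\<close> unfolding covering_def by auto
qed

lemma bipartite: "adj x y \<Longrightarrow> even (dep x) \<noteq> even (dep y)"
  using adj_dep by fastforce

end

locale rooted_shrub_reroot = rooted_shrub +
  fixes k' :: 'a
  assumes root_adj: "adj k k'"
begin

inductive above :: "'a \<Rightarrow> bool" where
  above_base: "above k'"
| above_step: "above y \<Longrightarrow> cov x y \<Longrightarrow> above x"

definition new_dep :: "'a \<Rightarrow> nat" where
  "new_dep x = (if above x then dep x - 1 else dep x + 1)"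

definition new_cov :: "'a \<Rightarrow> 'a \<Rightarrow> bool" where
  "new_cov x y \<longleftrightarrow> (cov x y \<and> (above x \<longleftrightarrow> above y)) \<or> (cov y x \<and> above y \<and> \<not> above x)"

lemma dep_root': "dep k' = 1"
  using adj_dep[OF root_adj] dep_root by auto

lemma above_dep_pos: "above x \<Longrightarrow> 1 \<le> dep x"
  by (induction rule: above.induct) (auto simp: dep_root' covering_def)

lemma not_above_root: "\<not> above k"
  using above_dep_pos dep_root by fastforce

lemmas root_facts = above_base not_above_root dep_root dep_root' root_adj

lemma above_cov: "cov x y \<Longrightarrow> above y \<Longrightarrow> above x"
  by (rule above_step)

lemma above_down: "above x \<Longrightarrow> x \<noteq> k' \<Longrightarrow> \<exists>y. cov x y \<and> above y"
  by (induction rule: above.cases) auto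

lemma above_dep_one: "above x \<Longrightarrow> dep x = 1 \<Longrightarrow> x = k'"
  using above_down above_dep_pos unfolding covering_def by fastforce

lemma above_dep_two: "above x \<Longrightarrow> dep x = 2 \<Longrightarrow> adj x k'"
  using above_down above_dep_one dep_root' unfolding covering_def by fastforce

lemma above_dep_two_cov: "above x \<Longrightarrow> dep x = 2 \<Longrightarrow> cov x k'"
  using above_dep_two dep_root' unfolding covering_def by simp

text \<open>Above depth 2, every vertex covered by a vertex above \<open>k'\<close> is itself above \<open>k'\<close>,
  by axiom (3) applied to a descending chain towards \<open>k'\<close>.\<close>

lemma above_cov_deep: "above x \<Longrightarrow> cov x y \<Longrightarrow> 3 \<le> dep x \<Longrightarrow> above y"
proof -
  assume x: "above x" and xy: "cov x y" and d3: "3 \<le> dep x"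
  then have "x \<noteq> k'" using dep_root' by auto
  then obtain z where z: "cov x z" "above z" using above_down x by blast
  then have "z \<noteq> k'" using dep_root' d3 unfolding covering_def by auto
  then obtain t where t: "cov z t" "above t" using above_down z(2) by blast
  show "above y"
  proof (cases "y = z")
    case False
    have "distinct [x, y, z, t]" using False xy z t unfolding covering_def by auto
    then have "adj y t" using ax3 xy z t by blast
    then show ?thesis using above_step[OF t(2)] xy z t unfolding covering_def by simp
  qed (use z in simp)
qed

lemma above_exit:
  "above x \<Longrightarrow> cov x y \<Longrightarrow> \<not> above y \<Longrightarrow> (x = k' \<and> y = k) \<or> (dep x = 2 \<and> dep y = 1)"
proof -
  assume x: "above x" and xy: "cov x y" and y: "\<not> above y"
  have "dep x = 1 \<or> dep x = 2"
    using above_dep_pos[OF x] above_cov_deep[OF x xy] y by linarith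
  then show ?thesis
  proof
    assume "dep x = 1"
    then have "x = k'" "dep y = 0" using above_dep_one x xy unfolding covering_def by auto
    then show ?thesis using cov_dep_zero xy by blast
  qed (use xy in \<open>simp add: covering_def\<close>)
qed

lemma new_cov_above: "above x \<Longrightarrow> new_cov x y \<longleftrightarrow> cov x y \<and> above y"
  unfolding new_cov_def using above_cov by blast

lemma new_cov_not_above: "\<not> above x \<Longrightarrow> new_cov x y \<longleftrightarrow> (cov x y \<and> \<not> above y) \<or> (cov y x \<and> above y)"
  unfolding new_cov_def by blast

lemma new_cov_ax3_c_above:
  assumes dst: "distinct [a, b, c, e]" and h: "new_cov a b" "new_cov a c" "new_cov c e"
    and a_low: "\<not> above a" and c_up: "above c"
  shows "adj b e"
proof -
  have cca: "cov c a" using h(2) a_low c_up by (simp add: new_cov_not_above)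
  have cce: "cov c e" and e_up: "above e" using h(3) c_up by (simp_all add: new_cov_above)
  have bcase: "(cov a b \<and> \<not> above b) \<or> (cov b a \<and> above b)" using h(1) a_low by (simp add: new_cov_not_above)
  from above_exit[OF c_up cca a_low] show ?thesis
  proof
    assume "c = k' \<and> a = k"
    then have "cov b a \<and> above b" using bcase root_facts unfolding covering_def by auto
    then have "b = k'" using above_dep_one \<open>c = k' \<and> a = k\<close> root_facts unfolding covering_def by auto
    then show ?thesis using \<open>c = k' \<and> a = k\<close> dst by simp
  next
    assume dd: "dep c = 2 \<and> dep a = 1"
    then have ek: "e = k'" using above_dep_one e_up cce unfolding covering_def by simp
    from bcase show ?thesis
    proof
      assume "cov a b \<and> \<not> above b"
      then have "b = k" using cov_dep_zero dd unfolding covering_def by auto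
      then show ?thesis using ek root_facts by simp
    next
      assume "cov b a \<and> above b"
      then show ?thesis using above_dep_two dd ek unfolding covering_def by simp
    qed
  qed
qed

lemma new_cov_ax3_b_above:
  assumes dst: "distinct [a, b, c, e]" and h: "new_cov a b" "new_cov a c" "new_cov c e"
    and a_low: "\<not> above a" and c_low: "\<not> above c" and b_up: "above b"
  shows "adj b e"
proof -
  have cac: "cov a c" using h(2) a_low c_low by (simp add: new_cov_not_above)
  have cba: "cov b a" using h(1) a_low b_up by (simp add: new_cov_not_above)
  from above_exit[OF b_up cba a_low] show ?thesis
  proof
    assume "b = k' \<and> a = k"
    then show ?thesis using cac root_facts unfolding covering_def by simp
  next
    assume dd: "dep b = 2 \<and> dep a = 1"
    then have "dep c = 0" using cac unfolding covering_def by simp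
    then have "cov e c \<and> above e" using h(3) c_low by (auto simp: new_cov_not_above covering_def)
    then have "e = k'" using above_dep_one \<open>dep c = 0\<close> unfolding covering_def by simp
    then show ?thesis using above_dep_two b_up dd by simp
  qed
qed

lemma new_cov_ax3_all_below:
  assumes dst: "distinct [a, b, c, e]" and h: "new_cov a b" "new_cov a c" "new_cov c e"
    and a_low: "\<not> above a" and c_low: "\<not> above c" and b_low: "\<not> above b"
  shows "adj b e"
proof -
  have cac: "cov a c" using h(2) a_low c_low by (simp add: new_cov_not_above)
  have cab: "cov a b" using h(1) a_low b_low by (simp add: new_cov_not_above)
  show ?thesis
  proof (cases "above e")
    case False
    then have "cov c e" using h(3) c_low by (simp add: new_cov_not_above)
    then show ?thesis using ax3[OF dst cab cac] by simp
  next
    case e_up: True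
    then have cec: "cov e c" using h(3) c_low by (simp add: new_cov_not_above)
    from above_exit[OF e_up cec c_low] show ?thesis
    proof
      assume "e = k' \<and> c = k"
      then have "b = k" using cov_dep_zero[OF cab] cab cac root_facts unfolding covering_def by simp
      then show ?thesis using \<open>e = k' \<and> c = k\<close> dst by simp
    next
      assume dd: "dep e = 2 \<and> dep c = 1"
      have cek: "cov e k'" using above_dep_two_cov e_up dd by simp
      have "distinct [a, e, b, c, k']" using dst a_low e_up b_low c_low root_facts dd by auto
      then have "adj a k' \<or> adj e b" using ax4 cab cac cec cek by blast
      moreover have "\<not> adj a k'"
      proof
        assume "adj a k'"
        then have "cov a k'" using cac dd root_facts unfolding covering_def by simp
        then show False using a_low above_cov root_facts by blast
      qed
      ultimately show ?thesis using adj_sym by blast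
    qed
  qed
qed

lemma new_cov_ax3:
  assumes "distinct [a, b, c, e]" "new_cov a b" "new_cov a c" "new_cov c e"
  shows "adj b e"
proof (cases "above a")
  case True
  then have "cov a b" "cov a c" "cov c e"
    using assms(2-4) above_cov by (auto simp: new_cov_above)
  then show ?thesis using ax3 assms(1) by blast
next
  case False
  then show ?thesis
    using assms new_cov_ax3_c_above new_cov_ax3_b_above new_cov_ax3_all_below by blast
qed

lemma new_cov_ax4_a_above:
  assumes dst: "distinct [a, b, c, d, e]" and h: "new_cov a c" "new_cov a d" "new_cov b d" "new_cov b e"
    and a_up: "above a"
  shows "adj a e \<or> adj b c"
proof -
  have cac: "cov a c" "above c" and cad: "cov a d" "above d"
    using h(1,2) a_up by (simp_all add: new_cov_above)
  show ?thesis
  proof (cases "above b")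
    case True
    then have "cov b d" "cov b e" using h(3,4) by (simp_all add: new_cov_above)
    then show ?thesis using ax4[OF dst cac(1) cad(1)] by simp
  next
    case b_low: False
    have cdb: "cov d b" using h(3) b_low cad(2) by (simp add: new_cov_not_above)
    from above_exit[OF cad(2) cdb b_low] show ?thesis
    proof
      assume dk: "d = k' \<and> b = k"
      then have "cov e b \<and> above e" using h(4) b_low root_facts by (auto simp: new_cov_not_above covering_def)
      then have "e = k'" using above_dep_one dk root_facts unfolding covering_def by simp
      then show ?thesis using dk dst by simp
    next
      assume "dep d = 2 \<and> dep b = 1"
      have "distinct [a, c, d, b]" using dst by auto
      then have "adj c b" using ax3 cac(1) cad(1) cdb by blast
      then show ?thesis using adj_sym by blast
    qed
  qed
qed

lemma new_cov_ax4_mixed: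
  assumes dst: "distinct [a, b, c, d, e]" and cad: "cov a d" and cbd: "cov b d"
    and a_low: "\<not> above a" and "cov c a" "above c" "cov b e"
  shows "adj a e \<or> adj b c"
proof -
  from above_exit[OF \<open>above c\<close> \<open>cov c a\<close> a_low] show ?thesis
  proof
    assume "c = k' \<and> a = k"
    then show ?thesis using cad root_facts unfolding covering_def by simp
  next
    assume "dep c = 2 \<and> dep a = 1"
    then have "d = k" "e = k" using cov_dep_zero cad cbd \<open>cov b e\<close> unfolding covering_def by auto
    then show ?thesis using dst by simp
  qed
qed

lemma new_cov_ax4_abd_below:
  assumes dst: "distinct [a, b, c, d, e]" and h: "new_cov a c" "new_cov a d" "new_cov b d" "new_cov b e"
    and a_low: "\<not> above a" and b_low: "\<not> above b" and d_low: "\<not> above d"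
  shows "adj a e \<or> adj b c"
proof -
  have cad: "cov a d" and cbd: "cov b d" using h(2,3) a_low b_low d_low by (simp_all add: new_cov_not_above)
  have dst': "distinct [b, a, e, d, c]" using dst by auto
  consider "cov a c" "cov b e" | "cov c a" "above c" "cov b e" | "cov a c" "cov e b" "above e"
    | "cov c a" "above c" "cov e b" "above e"
    using h(1,4) a_low b_low by (auto simp: new_cov_not_above)
  then show ?thesis
  proof cases
    case 1
    then show ?thesis using ax4[OF dst _ cad cbd] by simp
  next
    case 2
    then show ?thesis using new_cov_ax4_mixed[OF dst cad cbd a_low] by simp
  next
    case 3
    then show ?thesis using new_cov_ax4_mixed[OF dst' cbd cad b_low] by auto
  next
    case 4
    have "\<not> (c = k' \<and> a = k)" "\<not> (e = k' \<and> b = k)"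
      using cad cbd root_facts unfolding covering_def by auto
    then have dc: "dep c = 2 \<and> dep a = 1" and de: "dep e = 2 \<and> dep b = 1"
      using above_exit[OF 4(2,1) a_low] above_exit[OF 4(4,3) b_low] by blast+
    have "cov c k'" "cov e k'" using above_dep_two_cov 4 dc de by auto
    moreover have "distinct [e, c, b, k', a]" using dst a_low b_low 4 root_facts dc de by auto
    ultimately have "adj e a \<or> adj c b" using ax4 4 by blast
    then show ?thesis using adj_sym by blast
  qed
qed

lemma new_cov_ax4_d_above:
  assumes dst: "distinct [a, b, c, d, e]" and h: "new_cov a c" "new_cov a d" "new_cov b d" "new_cov b e"
    and a_low: "\<not> above a" and b_low: "\<not> above b" and d_up: "above d"
  shows "adj a e \<or> adj b c"
proof -
  have cda: "cov d a" and cdb: "cov d b" using h(2,3) a_low b_low d_up by (simp_all add: new_cov_not_above)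
  have dd: "dep d = 2 \<and> dep a = 1 \<and> dep b = 1"
    using above_exit[OF d_up cda a_low] above_exit[OF d_up cdb b_low] dst root_facts(4) by auto
  have ab_root: "adj a k" "adj b k"
    using cda cdb adj_sym dep_one_adj_root dd unfolding covering_def by blast+
  have ecase: "(cov b e \<and> \<not> above e) \<or> (cov e b \<and> above e)" using h(4) b_low by (simp add: new_cov_not_above)
  consider "cov a c" "\<not> above c" | "cov c a" "above c" using h(1) a_low by (auto simp: new_cov_not_above)
  then show ?thesis
  proof cases
    case 1
    then have "c = k" using cov_dep_zero[of a c] dd unfolding covering_def by simp
    then show ?thesis using ab_root(2) by simp
  next
    case 2
    show ?thesis using ecase
    proof
      assume "cov b e \<and> \<not> above e"
      then have "e = k" using cov_dep_zero[of b e] dd unfolding covering_def by simp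
      then show ?thesis using ab_root(1) by simp
    next
      assume ce: "cov e b \<and> above e"
      have dc: "dep c = 2" "dep e = 2" using 2 ce dd unfolding covering_def by auto
      have "cov c k'" "cov e k'" using above_dep_two_cov 2 ce dc by auto
      moreover have "distinct [e, c, b, k', a]" using dst a_low b_low 2 ce root_facts dc by auto
      ultimately have "adj e a \<or> adj c b" using ax4 2 ce by blast
      then show ?thesis using adj_sym by blast
    qed
  qed
qed

lemma new_cov_ax4:
  assumes "distinct [a, b, c, d, e]" "new_cov a c" "new_cov a d" "new_cov b d" "new_cov b e"
  shows "adj a e \<or> adj b c"
proof -
  have "distinct [b, a, e, d, c]" using assms(1) by auto
  then show ?thesis
    using assms new_cov_ax4_a_above new_cov_ax4_a_above[of b a e d c]
      new_cov_ax4_abd_below new_cov_ax4_d_above by blast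
qed

lemma covering_new_dep: "covering adj new_dep x y \<Longrightarrow> new_cov x y"
proof -
  assume "covering adj new_dep x y"
  then have xy: "adj x y" and e: "new_dep x = new_dep y + 1"
    by (auto simp: covering_def)
  show ?thesis
  proof (cases "above x"; cases "above y")
    assume "above x" "above y"
    then show ?thesis using e xy above_dep_pos[of x] above_dep_pos[of y]
      by (auto simp: new_cov_def covering_def new_dep_def)
  next
    assume "above x" "\<not> above y"
    then show ?thesis using e adj_dep[OF xy] above_dep_pos[of x] by (auto simp: new_dep_def)
  next
    assume "\<not> above x" "above y"
    then show ?thesis using e xy adj_sym above_dep_pos[of y]
      by (auto simp: new_cov_def covering_def new_dep_def)
  next
    assume "\<not> above x" "\<not> above y"
    then show ?thesis using e xy by (auto simp: new_cov_def covering_def new_dep_def)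
  qed
qed

lemma new_dep_adj:
  assumes "adj x y"
  shows "new_dep x = new_dep y + 1 \<or> new_dep y = new_dep x + 1"
proof -
  have "new_dep x = new_dep y + 1 \<or> new_dep y = new_dep x + 1" if "cov x y" for x y
  proof (cases "above y")
    case True
    then show ?thesis
      using that above_step[OF True] above_dep_pos[OF True] by (auto simp: new_dep_def covering_def)
  qed (use that in \<open>auto simp: new_dep_def covering_def\<close>)
  then show ?thesis using adj_dep[OF assms] assms adj_sym unfolding covering_def by blast
qed

lemma new_dep_covers_some:
  assumes "x \<in> V" "x \<noteq> k'"
  shows "\<exists>y. covering adj new_dep x y"
proof (cases "above x")
  case True
  then obtain y where "cov x y" "above y" using above_down assms by blast
  then show ?thesis using True above_dep_pos[of y]
    by (intro exI[of _ y]) (auto simp: covering_def new_dep_def)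
next
  case False
  show ?thesis
  proof (cases "x = k")
    case True
    then show ?thesis using False root_facts
      by (intro exI[of _ k']) (auto simp: covering_def new_dep_def)
  next
    case False
    then obtain y where "cov x y" using covers_some assms by blast
    then show ?thesis using \<open>\<not> above x\<close> above_step[of y x]
      by (intro exI[of _ y]) (auto simp: covering_def new_dep_def)
  qed
qed

theorem rooted_shrub_rerooted: "rooted_shrub adj V k' new_dep"
proof
  show "finite V" by (rule finite_V)
  show "k' \<in> V" using adj_in_V[OF root_adj] by blast
  show "new_dep k' = 0" using dep_root' by (simp add: new_dep_def above_base)
  show "0 < new_dep x" if "x \<in> V" "x \<noteq> k'" for x
    using that above_dep_one above_dep_pos by (fastforce simp: new_dep_def)
  show "adj x y \<Longrightarrow> x \<in> V \<and> y \<in> V" for x y by (rule adj_in_V)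
  show "adj x y \<Longrightarrow> adj y x" for x y by (rule adj_sym)
  show "adj x y \<Longrightarrow> new_dep x = new_dep y + 1 \<or> new_dep y = new_dep x + 1" for x y
    by (rule new_dep_adj)
  show "x \<in> V \<Longrightarrow> x \<noteq> k' \<Longrightarrow> \<exists>y. covering adj new_dep x y" for x
    by (rule new_dep_covers_some)
  show "adj b d" if "distinct [a, b, c, d]" "covering adj new_dep a b" "covering adj new_dep a c"
    "covering adj new_dep c d" for a b c d
    using new_cov_ax3 that covering_new_dep by blast
  show "adj a e \<or> adj b c" if "distinct [a, b, c, d, e]" "covering adj new_dep a c"
    "covering adj new_dep a d" "covering adj new_dep b d" "covering adj new_dep b e" for a b c d e
    using new_cov_ax4 that covering_new_dep by blast
qed

end

section \<open>Shrubs with an added root\<close>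

definition shrub_adj :: "nat \<Rightarrow> nat set set \<Rightarrow> (nat \<Rightarrow> nat) \<Rightarrow> nat \<Rightarrow> nat \<Rightarrow> bool" where
  "shrub_adj n E h x y \<longleftrightarrow>
     {x, y} \<in> E \<or> (x = 0 \<and> y \<in> {1..n} \<and> h y = 0) \<or> (y = 0 \<and> x \<in> {1..n} \<and> h x = 0)"

definition shrub_dep :: "(nat \<Rightarrow> nat) \<Rightarrow> nat \<Rightarrow> nat" where
  "shrub_dep h x = (if x = 0 then 0 else h x + 1)"

lemma shrub_edgeD:
  assumes "shrub n E h" "{x, y} \<in> E"
  shows "x \<in> {1..n}" "y \<in> {1..n}" "h x = h y + 1 \<or> h y = h x + 1"
proof -
  have "\<forall>e\<in>E. \<exists>i j. e = {i, j} \<and> i \<noteq> j \<and> i \<in> {1..n} \<and> j \<in> {1..n}"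
    using assms(1) unfolding shrub_def by (elim conjE)
  then obtain i j where "{x, y} = {i, j}" "i \<in> {1..n}" "j \<in> {1..n}"
    using assms(2) by blast
  then show "x \<in> {1..n}" "y \<in> {1..n}" by (auto simp: doubleton_eq_iff)
  have "\<forall>i j. {i, j} \<in> E \<longrightarrow> h i = h j + 1 \<or> h j = h i + 1"
    using assms(1) unfolding shrub_def by (elim conjE)
  then show "h x = h y + 1 \<or> h y = h x + 1" using assms(2) by blast
qed

lemma shrub_ax3:
  assumes "shrub n E h" "distinct [a, b, c, d]"
    "covers E h a b" "covers E h a c" "covers E h c d"
  shows "{b, d} \<in> E"
proof -
  have "a \<in> {1..n}" "b \<in> {1..n}" "c \<in> {1..n}" "d \<in> {1..n}"
    using assms(3-5) shrub_edgeD[OF assms(1)] unfolding covers_def by blast+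
  moreover have "\<not> (\<exists>a\<in>{1..n}. \<exists>b\<in>{1..n}. \<exists>c\<in>{1..n}. \<exists>d\<in>{1..n}.
      distinct [a, b, c, d] \<and> covers E h a b \<and> covers E h a c \<and> covers E h c d \<and> {b, d} \<notin> E)"
    using assms(1) unfolding shrub_def by (elim conjE)
  ultimately show ?thesis using assms(2-5) by blast
qed

lemma shrub_ax4:
  assumes "shrub n E h" "distinct [a, b, c, d, e]"
    "covers E h a c" "covers E h a d" "covers E h b d" "covers E h b e"
  shows "{a, e} \<in> E \<or> {b, c} \<in> E"
proof -
  have "a \<in> {1..n}" "b \<in> {1..n}" "c \<in> {1..n}" "d \<in> {1..n}" "e \<in> {1..n}"
    using assms(3-6) shrub_edgeD[OF assms(1)] unfolding covers_def by blast+
  moreover have "\<not> (\<exists>a\<in>{1..n}. \<exists>b\<in>{1..n}. \<exists>c\<in>{1..n}. \<exists>d\<in>{1..n}. \<exists>e\<in>{1..n}.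
      distinct [a, b, c, d, e] \<and> covers E h a c \<and> covers E h a d \<and> covers E h b d \<and>
      covers E h b e \<and> {a, e} \<notin> E \<and> {b, c} \<notin> E)"
    using assms(1) unfolding shrub_def by (elim conjE)
  ultimately show ?thesis using assms(2-6) by blast
qed

lemma covering_shrub_adj:
  assumes "shrub n E h"
  shows "covering (shrub_adj n E h) (shrub_dep h) x y \<longleftrightarrow>
    (y = 0 \<and> x \<in> {1..n} \<and> h x = 0) \<or> (y \<noteq> 0 \<and> covers E h x y)"
proof -
  have "z \<in> {1..n}" if "{z, w} \<in> E \<or> {w, z} \<in> E" for z w
    using that shrub_edgeD[OF assms] by blast
  then show ?thesis
    by (cases "x = 0"; cases "y = 0")
       (auto simp: covering_def shrub_adj_def shrub_dep_def covers_def insert_commute)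
qed

theorem rooted_shrub_of_shrub:
  assumes S: "shrub n E h"
  shows "rooted_shrub (shrub_adj n E h) {0..n} 0 (shrub_dep h)"
proof
  let ?adj = "shrub_adj n E h" and ?dep = "shrub_dep h"
  note cov = covering_shrub_adj[OF S]
  have edge: "x \<in> {1..n} \<and> y \<in> {1..n}" if "{x, y} \<in> E" for x y
    using shrub_edgeD[OF S that] by blast
  show "finite {0..n}" "0 \<in> {0..n}" "?dep 0 = 0" by (simp_all add: shrub_dep_def)
  show "0 < ?dep x" if "x \<noteq> 0" for x using that by (simp add: shrub_dep_def)
  show "?adj x y \<Longrightarrow> x \<in> {0..n} \<and> y \<in> {0..n}" for x y
    using edge by (auto simp: shrub_adj_def)
  show "?adj x y \<Longrightarrow> ?adj y x" for x y
    by (auto simp: shrub_adj_def insert_commute)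
  show "?dep x = ?dep y + 1 \<or> ?dep y = ?dep x + 1" if "?adj x y" for x y
    using that edge shrub_edgeD(3)[OF S] by (auto simp: shrub_adj_def shrub_dep_def)
  show "\<exists>y. covering ?adj ?dep x y" if "x \<in> {0..n}" "x \<noteq> 0" for x
  proof (cases "h x = 0")
    case False
    have "x \<in> {1..n}" using that by auto
    then obtain j where "covers E h x j"
      using S False unfolding shrub_def by blast
    moreover from this have "j \<noteq> 0" using edge unfolding covers_def by fastforce
    ultimately have "covering ?adj ?dep x j" using cov[of x j] by simp
    then show ?thesis by blast
  next
    case True
    then have "covering ?adj ?dep x 0" using cov[of x 0] that by simp
    then show ?thesis by blast
  qed
  show "?adj b d" if "distinct [a, b, c, d]" "covering ?adj ?dep a b" "covering ?adj ?dep a c"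
    "covering ?adj ?dep c d" for a b c d
  proof (cases "d = 0")
    case True
    then show ?thesis using that cov[of a b] cov[of a c] cov[of c d] edge[of b a]
      by (auto simp: covers_def shrub_adj_def)
  next
    case False
    then have "covers E h a b" "covers E h a c" "covers E h c d"
      using that cov[of a b] cov[of a c] cov[of c d] by (auto simp: covers_def)
    then show ?thesis using shrub_ax3[OF S that(1)] by (simp add: shrub_adj_def)
  qed
  show "?adj a e \<or> ?adj b c" if "distinct [a, b, c, d, e]" "covering ?adj ?dep a c"
    "covering ?adj ?dep a d" "covering ?adj ?dep b d" "covering ?adj ?dep b e" for a b c d e
  proof -
    have "covers E h a c" "covers E h a d" "covers E h b d" "covers E h b e"
      using that cov[of a c] cov[of a d] cov[of b d] cov[of b e] by (auto simp: covers_def)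
    then show ?thesis using shrub_ax4[OF S that(1)] by (auto simp: shrub_adj_def)
  qed
qed

definition graph_edges :: "(nat \<Rightarrow> nat \<Rightarrow> bool) \<Rightarrow> nat set set" where
  "graph_edges adj = {{x, y} | x y. adj x y \<and> x \<noteq> 0 \<and> y \<noteq> 0}"

context
  fixes adj :: "nat \<Rightarrow> nat \<Rightarrow> bool" and n :: nat and dep :: "nat \<Rightarrow> nat"
  assumes G: "rooted_shrub adj {0..n} 0 dep"
begin

interpretation rooted_shrub adj "{0..n}" 0 dep by (fact G)

lemma mem_graph_edges: "{x, y} \<in> graph_edges adj \<longleftrightarrow> adj x y \<and> x \<noteq> 0 \<and> y \<noteq> 0"
proof
  assume "{x, y} \<in> graph_edges adj"
  then obtain x' y' where "{x, y} = {x', y'}" "adj x' y'" "x' \<noteq> 0" "y' \<noteq> 0"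
    unfolding graph_edges_def by blast
  then show "adj x y \<and> x \<noteq> 0 \<and> y \<noteq> 0" using adj_sym by (auto simp: doubleton_eq_iff)
qed (auto simp: graph_edges_def)

lemma covers_graph_edges:
  "covers (graph_edges adj) (\<lambda>x. dep x - 1) a b \<longleftrightarrow> cov a b \<and> a \<noteq> 0 \<and> b \<noteq> 0"
proof
  assume "covers (graph_edges adj) (\<lambda>x. dep x - 1) a b"
  then have "adj a b" "a \<noteq> 0" "b \<noteq> 0" "dep a - 1 = dep b - 1 + 1"
    using mem_graph_edges adj_sym unfolding covers_def by auto
  moreover have "0 < dep b" using dep_pos adj_in_V \<open>adj a b\<close> \<open>b \<noteq> 0\<close> by blast
  ultimately show "cov a b \<and> a \<noteq> 0 \<and> b \<noteq> 0" unfolding covering_def by auto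
next
  assume "cov a b \<and> a \<noteq> 0 \<and> b \<noteq> 0"
  moreover have "0 < dep b" using dep_pos adj_in_V calculation unfolding covering_def by blast
  ultimately show "covers (graph_edges adj) (\<lambda>x. dep x - 1) a b"
    using mem_graph_edges adj_sym unfolding covers_def covering_def by auto
qed

theorem shrub_of_rooted_shrub: "shrub n (graph_edges adj) (\<lambda>x. dep x - 1)"
  unfolding shrub_def
proof (intro conjI)
  let ?E = "graph_edges adj" and ?h = "\<lambda>x. dep x - 1"
  show "\<forall>e\<in>?E. \<exists>i j. e = {i, j} \<and> i \<noteq> j \<and> i \<in> {1..n} \<and> j \<in> {1..n}"
  proof
    fix e assume "e \<in> ?E"
    then obtain x y where e: "e = {x, y}" "adj x y" "x \<noteq> 0" "y \<noteq> 0"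
      unfolding graph_edges_def by blast
    then have "x \<noteq> y" using adj_dep[OF e(2)] by auto
    then show "\<exists>i j. e = {i, j} \<and> i \<noteq> j \<and> i \<in> {1..n} \<and> j \<in> {1..n}"
      using e adj_in_V[OF e(2)] by (intro exI[of _ x] exI[of _ y]) auto
  qed
  show "\<forall>i j. {i, j} \<in> ?E \<longrightarrow> ?h i = ?h j + 1 \<or> ?h j = ?h i + 1"
  proof (intro allI impI)
    fix i j assume "{i, j} \<in> ?E"
    then have ij: "adj i j" "i \<noteq> 0" "j \<noteq> 0" using mem_graph_edges by auto
    then have "0 < dep i" "0 < dep j" using dep_pos adj_in_V by auto
    then show "?h i = ?h j + 1 \<or> ?h j = ?h i + 1" using adj_dep[OF ij(1)] by auto
  qed
  show "\<forall>i\<in>{1..n}. 0 < ?h i \<longrightarrow> (\<exists>j\<in>{1..n}. covers ?E ?h i j)"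
  proof (intro ballI impI)
    fix i assume i: "i \<in> {1..n}" "0 < ?h i"
    then obtain y where y: "cov i y" using covers_some by force
    then have "y \<noteq> 0" using i dep_root unfolding covering_def by (cases "y = 0") auto
    then show "\<exists>j\<in>{1..n}. covers ?E ?h i j"
      using covers_graph_edges y i adj_in_V unfolding covering_def by fastforce
  qed
  show "\<not> (\<exists>a\<in>{1..n}. \<exists>b\<in>{1..n}. \<exists>c\<in>{1..n}. \<exists>d\<in>{1..n}. distinct [a, b, c, d] \<and>
      covers ?E ?h a b \<and> covers ?E ?h a c \<and> covers ?E ?h c d \<and> {b, d} \<notin> ?E)"
  proof (clarify)
    fix a b c d assume "distinct [a, b, c, d]" "covers ?E ?h a b" "covers ?E ?h a c"
      "covers ?E ?h c d" "{b, d} \<notin> ?E"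
    then show False using ax3[of a b c d] unfolding covers_graph_edges mem_graph_edges by blast
  qed
  show "\<not> (\<exists>a\<in>{1..n}. \<exists>b\<in>{1..n}. \<exists>c\<in>{1..n}. \<exists>d\<in>{1..n}. \<exists>e\<in>{1..n}. distinct [a, b, c, d, e] \<and>
      covers ?E ?h a c \<and> covers ?E ?h a d \<and> covers ?E ?h b d \<and> covers ?E ?h b e \<and>
      {a, e} \<notin> ?E \<and> {b, c} \<notin> ?E)"
  proof (clarify)
    fix a b c d e assume "distinct [a, b, c, d, e]" "covers ?E ?h a c" "covers ?E ?h a d"
      "covers ?E ?h b d" "covers ?E ?h b e" "{a, e} \<notin> ?E" "{b, c} \<notin> ?E"
    then show False using ax4[of a b c d e] unfolding covers_graph_edges mem_graph_edges by blast
  qed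
qed

lemma adj_root_iff: "adj 0 y \<longleftrightarrow> y \<in> {1..n} \<and> dep y = 1"
proof
  assume a: "adj 0 y"
  then have "dep y = 1" using adj_dep[OF a] dep_root by auto
  moreover have "y \<noteq> 0" using \<open>dep y = 1\<close> dep_root by (cases "y = 0") auto
  ultimately show "y \<in> {1..n} \<and> dep y = 1" using adj_in_V[OF a] by auto
next
  assume y: "y \<in> {1..n} \<and> dep y = 1"
  then obtain z where "cov y z" using covers_some by force
  then have "z = 0" using cov_dep_zero y by (auto simp: covering_def)
  then show "adj 0 y" using adj_sym \<open>cov y z\<close> unfolding covering_def by blast
qed

theorem shrub_adj_graph_edges: "shrub_adj n (graph_edges adj) (\<lambda>x. dep x - 1) = adj"
proof (intro ext)
  fix x y
  have dep_one: "y \<in> {1..n} \<Longrightarrow> dep y - 1 = 0 \<longleftrightarrow> dep y = 1" for y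
    using dep_pos[of y] by auto
  show "shrub_adj n (graph_edges adj) (\<lambda>x. dep x - 1) x y = adj x y"
  proof (cases "x = 0 \<or> y = 0")
    case True
    then have "{x, y} \<notin> graph_edges adj" by (auto simp: mem_graph_edges)
    then show ?thesis
      using True adj_root_iff[of x] adj_root_iff[of y] dep_one[of x] dep_one[of y] adj_sym[of 0]
        adj_sym[of _ 0] by (auto simp: shrub_adj_def)
  qed (auto simp: shrub_adj_def mem_graph_edges)
qed

end

lemma before_nth_iff:
  assumes "distinct xs" "p < length xs"
  shows "before xs j (xs ! p) \<longleftrightarrow> (\<exists>q<p. xs ! q = j)"
proof
  assume "before xs j (xs ! p)"
  then obtain k l where "k < l" "l < length xs" "xs ! k = j" "xs ! l = xs ! p"
    unfolding before_def by blast
  moreover from this have "l = p" using assms nth_eq_iff_index_eq by blast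
  ultimately show "\<exists>q<p. xs ! q = j" by blast
next
  assume "\<exists>q<p. xs ! q = j"
  then show "before xs j (xs ! p)" using assms(2) unfolding before_def by blast
qed

text \<open>An earlier neighbour of \<open>xs ! p\<close> that lies above it covers, by induction, an even earlier
  vertex \<open>z\<close> at the height of \<open>xs ! p\<close>, which covers an earlier \<open>t\<close>; axiom (3) then joins
  \<open>xs ! p\<close> to \<open>t\<close>.\<close>

lemma grows_from_shrub_adj_covers_before:
  assumes S: "shrub n E h" and xs: "set xs = {1..n}" "distinct xs"
    and g: "grows_from (shrub_adj n E h) {0} xs"
  shows "p < length xs \<Longrightarrow> 0 < h (xs ! p) \<Longrightarrow> \<exists>q<p. covers E h (xs ! p) (xs ! q)"
proof (induction p rule: less_induct)
  case (less p)
  let ?i = "xs ! p"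
  have inr: "j < length xs \<Longrightarrow> xs ! j \<in> {1..n}" for j using xs nth_mem by blast
  obtain a where a: "a \<in> {0} \<union> set (take p xs)" "shrub_adj n E h a ?i"
    using g less.prems(1) unfolding grows_from_nth by blast
  have "a \<noteq> 0"
    using a(2) less.prems shrub_edgeD(1)[OF S] inr[OF less.prems(1)]
    unfolding shrub_adj_def by fastforce
  then obtain q where q: "q < p" "xs ! q = a" using a(1) less.prems(1)
    by (auto simp: in_set_conv_nth)
  have e: "{a, ?i} \<in> E" using a(2) \<open>a \<noteq> 0\<close> inr[OF less.prems(1)] unfolding shrub_adj_def by auto
  show ?case
  proof (cases "h ?i = h a + 1")
    case True
    then show ?thesis using e q unfolding covers_def by auto
  next
    case False
    then have ha: "h a = h ?i + 1" using shrub_edgeD(3)[OF S e] by simp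
    then obtain q' where q': "q' < q" "covers E h a (xs ! q')"
      using less.IH[of q] q less.prems(1) by auto
    let ?z = "xs ! q'"
    have "h ?z = h ?i" using q'(2) ha unfolding covers_def by simp
    then obtain r where r: "r < q'" "covers E h ?z (xs ! r)"
      using less.IH[of q'] q' q less.prems by auto
    have "distinct [a, ?i, ?z, xs ! r]"
      using xs(2) q q' r less.prems(1) by (auto simp: nth_eq_iff_index_eq)
    moreover have "covers E h a ?i" using e ha unfolding covers_def by (simp add: insert_commute)
    ultimately have "{?i, xs ! r} \<in> E" using shrub_ax3[OF S] q'(2) r(2) by blast
    then have "covers E h ?i (xs ! r)"
      using r(2) \<open>h ?z = h ?i\<close> unfolding covers_def by (simp add: insert_commute)
    then show ?thesis using r q q' by (intro exI[of _ r]) auto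
  qed
qed

lemma gamma_orders_iff_grows_from:
  assumes S: "shrub n E h" and xs: "xs \<in> total_orders n"
  shows "xs \<in> gamma_orders n E h \<longleftrightarrow> grows_from (shrub_adj n E h) {0} xs"
proof -
  have sx: "set xs = {1..n}" "distinct xs" using xs by (auto simp: total_orders_def)
  have inr: "p < length xs \<Longrightarrow> xs ! p \<in> {1..n}" for p using sx nth_mem by blast
  show ?thesis
  proof
    assume g: "xs \<in> gamma_orders n E h"
    show "grows_from (shrub_adj n E h) {0} xs" unfolding grows_from_nth
    proof (intro allI impI)
      fix p assume p: "p < length xs"
      show "\<exists>a\<in>{0} \<union> set (take p xs). shrub_adj n E h a (xs ! p)"
      proof (cases "h (xs ! p) = 0")
        case False
        then obtain j where j: "covers E h (xs ! p) j" "before xs j (xs ! p)"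
          using g inr[OF p] unfolding gamma_orders_def by blast
        then obtain q where "q < p" "xs ! q = j" using before_nth_iff[OF sx(2) p] by blast
        then have "j \<in> set (take p xs)" using p by (auto simp: in_set_conv_nth)
        then show ?thesis using j(1) unfolding covers_def shrub_adj_def by auto
      qed (use inr[OF p] in \<open>auto simp: shrub_adj_def\<close>)
    qed
  next
    assume "grows_from (shrub_adj n E h) {0} xs"
    note earlier = grows_from_shrub_adj_covers_before[OF S sx this]
    show "xs \<in> gamma_orders n E h" unfolding gamma_orders_def
    proof (intro CollectI conjI ballI impI)
      fix i assume i: "i \<in> {1..n}" "0 < h i"
      then obtain p where p: "p < length xs" "xs ! p = i" using sx by (metis in_set_conv_nth)
      then obtain q where "q < p" "covers E h i (xs ! q)" using earlier i by blast
      then show "\<exists>j\<in>{1..n}. covers E h i j \<and> before xs j i"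
        using inr[of q] p before_nth_iff[OF sx(2) p(1)] by auto
    qed (fact xs)
  qed
qed

lemma rooted_sum_cong:
  "(\<And>x. x \<in> V \<Longrightarrow> x \<noteq> k \<Longrightarrow> u x = u' x) \<Longrightarrow> rooted_sum adj V k u = rooted_sum adj V k u'"
proof -
  assume "\<And>x. x \<in> V \<Longrightarrow> x \<noteq> k \<Longrightarrow> u x = u' x"
  then have "iota xs u = iota xs u'" if "xs \<in> permutations_of_set (V - {k})" for xs
    using that by (intro iota_cong) (auto dest: permutations_of_setD)
  then show ?thesis unfolding rooted_sum_def by (intro sum.cong) auto
qed

lemma fP_eq_rooted_sum:
  assumes "shrub n E h"
  shows "fP n E h u = rooted_sum (shrub_adj n E h) {0..n} 0 (ext_u n u)"
proof -
  have "{0..n} - {0} = {1..n}" by auto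
  then have T: "permutations_of_set ({0..n} - {0}) = total_orders n"
    by (simp add: permutations_of_set_def total_orders_def conj_commute)
  then have fin: "finite (total_orders n)" by (metis finite_permutations_of_set)
  have "{xs \<in> total_orders n. xs \<in> gamma_orders n E h} = gamma_orders n E h"
    by (auto simp: gamma_orders_def)
  then have "fP n E h u = (\<Sum>xs\<in>total_orders n. if xs \<in> gamma_orders n E h then iota xs u else 0)"
    unfolding fP_def using sum.inter_filter[OF fin, of "\<lambda>xs. iota xs u"] by metis
  also have "\<dots> = rooted_sum (shrub_adj n E h) {0..n} 0 u"
    unfolding rooted_sum_def T
    by (intro sum.cong refl) (simp add: gamma_orders_iff_grows_from[OF assms])
  also have "\<dots> = rooted_sum (shrub_adj n E h) {0..n} 0 (ext_u n u)"
    by (rule rooted_sum_cong) (simp add: ext_u_def)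
  finally show ?thesis .
qed

section \<open>The anticyclic action\<close>

lemma rooted_sum_permute:
  assumes p: "\<pi> permutes V"
  shows "rooted_sum adj V k (u \<circ> \<pi>) = rooted_sum (\<lambda>x y. adj (inv \<pi> x) (inv \<pi> y)) V (\<pi> k) u"
proof -
  let ?adj' = "\<lambda>x y. adj (inv \<pi> x) (inv \<pi> y)"
  have inj: "inj \<pi>" using p by (rule permutes_inj)
  have "\<pi> ` (V - {k}) = V - {\<pi> k}"
    using permutes_image[OF p] inj by (simp add: image_set_diff)
  then have perms: "permutations_of_set (V - {\<pi> k}) = map \<pi> ` permutations_of_set (V - {k})"
    using permutations_of_set_image_inj[of \<pi> "V - {k}"] inj by (simp add: inj_on_subset)
  have adj': "?adj' (\<pi> x) (\<pi> y) \<longleftrightarrow> adj x y" for x y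
    using permutes_inverses(2)[OF p] by simp
  have grows: "grows_from ?adj' {\<pi> k} (map \<pi> xs) \<longleftrightarrow> grows_from adj {k} xs" for xs
    using grows_from_map[of ?adj' \<pi> adj "{k}" xs] adj' by simp
  have "inj_on (map \<pi>) (permutations_of_set (V - {k}))"
    using inj_mapI[OF inj] by (rule inj_on_subset) simp
  then have "rooted_sum ?adj' V (\<pi> k) u = (\<Sum>xs\<in>permutations_of_set (V - {k}).
      if grows_from ?adj' {\<pi> k} (map \<pi> xs) then iota (map \<pi> xs) u else 0)"
    unfolding rooted_sum_def perms by (simp add: sum.reindex)
  also have "\<dots> = rooted_sum adj V k (u \<circ> \<pi>)"
    unfolding rooted_sum_def grows iota_map[OF inj] ..
  finally show ?thesis ..
qed

lemma rooted_shrub_permute: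
  assumes G: "rooted_shrub adj V k dep" and p: "\<pi> permutes V"
  shows "rooted_shrub (\<lambda>x y. adj (inv \<pi> x) (inv \<pi> y)) V (\<pi> k) (dep \<circ> inv \<pi>)"
proof -
  interpret rooted_shrub adj V k dep by (fact G)
  have pi: "inv \<pi> (\<pi> x) = x" "\<pi> (inv \<pi> x) = x" for x
    using permutes_inverses[OF p] by auto
  have inV: "inv \<pi> x \<in> V \<longleftrightarrow> x \<in> V" for x
    using permutes_in_image[OF permutes_inv[OF p]] by blast
  have cov: "covering (\<lambda>x y. adj (inv \<pi> x) (inv \<pi> y)) (dep \<circ> inv \<pi>) x y \<longleftrightarrow> cov (inv \<pi> x) (inv \<pi> y)"
    for x y by (simp add: covering_def)
  have dist: "distinct (map (inv \<pi>) xs) \<longleftrightarrow> distinct xs" for xs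
    using permutes_inj[OF permutes_inv[OF p]] by (auto simp: distinct_map intro: inj_on_subset)
  show ?thesis
  proof
    show "finite V" by (rule finite_V)
    show "\<pi> k \<in> V" using root_in_V inV pi by metis
    show "(dep \<circ> inv \<pi>) (\<pi> k) = 0" using dep_root pi by simp
    show "0 < (dep \<circ> inv \<pi>) x" if "x \<in> V" "x \<noteq> \<pi> k" for x
      using dep_pos that inV pi by (metis comp_apply)
    show "adj (inv \<pi> x) (inv \<pi> y) \<Longrightarrow> x \<in> V \<and> y \<in> V" for x y using adj_in_V inV by blast
    show "adj (inv \<pi> x) (inv \<pi> y) \<Longrightarrow> adj (inv \<pi> y) (inv \<pi> x)" for x y by (rule adj_sym)
    show "adj (inv \<pi> x) (inv \<pi> y) \<Longrightarrow> (dep \<circ> inv \<pi>) x = (dep \<circ> inv \<pi>) y + 1 \<or>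
        (dep \<circ> inv \<pi>) y = (dep \<circ> inv \<pi>) x + 1" for x y using adj_dep by simp
    show "\<exists>y. covering (\<lambda>x y. adj (inv \<pi> x) (inv \<pi> y)) (dep \<circ> inv \<pi>) x y"
      if "x \<in> V" "x \<noteq> \<pi> k" for x
    proof -
      have "inv \<pi> x \<in> V" "inv \<pi> x \<noteq> k" using that inV pi by metis+
      then obtain y where "cov (inv \<pi> x) y" using covers_some by blast
      then have "cov (inv \<pi> x) (inv \<pi> (\<pi> y))" using pi by simp
      then show ?thesis unfolding cov by blast
    qed
    show "adj (inv \<pi> b) (inv \<pi> d)" if "distinct [a, b, c, d]"
      "covering (\<lambda>x y. adj (inv \<pi> x) (inv \<pi> y)) (dep \<circ> inv \<pi>) a b"
      "covering (\<lambda>x y. adj (inv \<pi> x) (inv \<pi> y)) (dep \<circ> inv \<pi>) a c"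
      "covering (\<lambda>x y. adj (inv \<pi> x) (inv \<pi> y)) (dep \<circ> inv \<pi>) c d" for a b c d
      using ax3[of "inv \<pi> a" "inv \<pi> b" "inv \<pi> c" "inv \<pi> d"] that dist[of "[a, b, c, d]"]
      unfolding cov by simp
    show "adj (inv \<pi> a) (inv \<pi> e) \<or> adj (inv \<pi> b) (inv \<pi> c)" if "distinct [a, b, c, d, e]"
      "covering (\<lambda>x y. adj (inv \<pi> x) (inv \<pi> y)) (dep \<circ> inv \<pi>) a c"
      "covering (\<lambda>x y. adj (inv \<pi> x) (inv \<pi> y)) (dep \<circ> inv \<pi>) a d"
      "covering (\<lambda>x y. adj (inv \<pi> x) (inv \<pi> y)) (dep \<circ> inv \<pi>) b d"
      "covering (\<lambda>x y. adj (inv \<pi> x) (inv \<pi> y)) (dep \<circ> inv \<pi>) b e" for a b c d e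
      using ax4[of "inv \<pi> a" "inv \<pi> b" "inv \<pi> c" "inv \<pi> d" "inv \<pi> e"] that
        dist[of "[a, b, c, d, e]"]
      unfolding cov by simp
  qed
qed

lemma rooted_shrub_change_root:
  assumes G: "rooted_shrub adj V k dep" and "r \<in> V"
  shows "\<exists>d. rooted_shrub adj V r d"
proof -
  interpret rooted_shrub adj V k dep by (fact G)
  have "\<forall>r\<in>V. dep r = m \<longrightarrow> (\<exists>d. rooted_shrub adj V r d)" for m
  proof (induction m)
    case 0
    then show ?case using G dep_pos by fastforce
  next
    case (Suc m)
    show ?case
    proof (intro ballI impI)
      fix r assume r: "r \<in> V" "dep r = Suc m"
      then obtain y where "cov r y" using covers_some dep_root by fastforce
      then have "y \<in> V" "dep y = m" "adj y r"
        using adj_in_V adj_sym r(2) unfolding covering_def by auto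
      then obtain d where "rooted_shrub adj V y d" using Suc.IH by blast
      with \<open>adj y r\<close> have "rooted_shrub_reroot adj V y d r"
        by (simp add: rooted_shrub_reroot_def rooted_shrub_reroot_axioms_def)
      then show "\<exists>d. rooted_shrub adj V r d"
        by (blast dest: rooted_shrub_reroot.rooted_shrub_rerooted)
    qed
  qed
  then show ?thesis using \<open>r \<in> V\<close> by blast
qed

lemma rooted_sum_change_root:
  assumes G: "rooted_shrub adj V k dep" and "r \<in> V" and u: "balanced_generic V u"
  shows "rooted_sum adj V r u = (-1) ^ dep r * rooted_sum adj V k u"
proof -
  interpret rooted_shrub adj V k dep by (fact G)
  have "\<forall>r\<in>V. dep r = m \<longrightarrow> rooted_sum adj V r u = (-1) ^ dep r * rooted_sum adj V k u" for m
  proof (induction m)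
    case 0
    then show ?case using dep_pos by fastforce
  next
    case (Suc m)
    show ?case
    proof (intro ballI impI)
      fix r assume r: "r \<in> V" "dep r = Suc m"
      then obtain y where "cov r y" using covers_some dep_root by fastforce
      then have "y \<in> V" "dep y = m" "adj y r"
        using adj_in_V adj_sym r(2) unfolding covering_def by auto
      have "bicoloured_edge adj (\<lambda>x. even (dep x)) y r"
        using adj_sym bipartite \<open>adj y r\<close> by unfold_locales auto
      then have "rooted_sum adj V r u = - rooted_sum adj V y u"
        using rooted_sum_reroot finite_V \<open>y \<in> V\<close> r(1) u by blast
      then show "rooted_sum adj V r u = (-1) ^ dep r * rooted_sum adj V k u"
        using Suc.IH \<open>y \<in> V\<close> \<open>dep y = m\<close> r(2) by simp
    qed
  qed
  then show ?thesis using \<open>r \<in> V\<close> by blast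
qed

lemma balanced_generic_ext_u:
  assumes "generic n u"
  shows "balanced_generic {0..n} (ext_u n u)"
  unfolding balanced_generic_def
proof (intro conjI allI impI)
  have "sum (ext_u n u) {1..n} = sum u {1..n}" by (intro sum.cong) (auto simp: ext_u_def)
  moreover have "{0..n} = insert 0 {1..n}" by auto
  ultimately show "sum (ext_u n u) {0..n} = 0" by (simp add: ext_u_def)
  fix S assume S: "S \<subseteq> {0..n}" "S \<noteq> {}" "S \<noteq> {0..n}"
  show "sum (ext_u n u) S \<noteq> 0"
  proof (cases "0 \<in> S")
    case False
    have "S \<subseteq> {1..n}"
    proof
      fix x assume "x \<in> S"
      then show "x \<in> {1..n}" using S(1) False by (cases x) auto
    qed
    moreover have "sum (ext_u n u) S = sum u S"
      using False by (intro sum.cong) (auto simp: ext_u_def)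
    ultimately show ?thesis using assms S(2) unfolding generic_def by auto
  next
    case True
    let ?T = "{1..n} - S"
    have "?T \<noteq> {}"
    proof
      assume "?T = {}"
      then have "{0..n} \<subseteq> S" using True by (auto simp: subset_iff) (metis Suc_leI neq0_conv)
      then show False using S by auto
    qed
    have "{1..n} = (S - {0}) \<union> ?T" using S(1) by auto
    then have "sum u {1..n} = sum u ((S - {0}) \<union> ?T)" by (rule arg_cong)
    also have "\<dots> = sum u (S - {0}) + sum u ?T"
      using finite_subset[OF S(1)] by (intro sum.union_disjoint) auto
    finally have "sum u {1..n} = sum u (S - {0}) + sum u ?T" .
    moreover have "sum (ext_u n u) S = ext_u n u 0 + sum (ext_u n u) (S - {0})"
      using True finite_subset[OF S(1)] by (simp add: sum.remove)
    moreover have "sum (ext_u n u) (S - {0}) = sum u (S - {0})"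
      by (intro sum.cong) (auto simp: ext_u_def)
    ultimately have "sum (ext_u n u) S = - sum u ?T" by (simp add: ext_u_def)
    moreover have "sum u ?T \<noteq> 0" using assms \<open>?T \<noteq> {}\<close> unfolding generic_def by blast
    ultimately show ?thesis by simp
  qed
qed

lemma balanced_generic_permute:
  assumes "\<sigma> permutes V" "balanced_generic V u"
  shows "balanced_generic V (u \<circ> \<sigma>)"
  unfolding balanced_generic_def
proof (intro conjI allI impI)
  have inj: "inj \<sigma>" using assms(1) by (rule permutes_inj)
  show "sum (u \<circ> \<sigma>) V = 0"
    using assms sum.permute[OF assms(1), of u] by (simp add: balanced_generic_def)
  fix S assume S: "S \<subseteq> V" "S \<noteq> {}" "S \<noteq> V"
  have "\<sigma> ` S \<subseteq> V" using S(1) permutes_image[OF assms(1)] by blast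
  moreover have "\<sigma> ` S \<noteq> V"
    using S(3) permutes_image[OF assms(1)] inj by (metis inj_image_eq_iff)
  ultimately have "sum u (\<sigma> ` S) \<noteq> 0"
    using assms(2) S(2) unfolding balanced_generic_def by blast
  then show "sum (u \<circ> \<sigma>) S \<noteq> 0"
    using sum.reindex[of \<sigma> S u] inj by (simp add: inj_on_subset)
qed

lemma mould_act_fP:
  assumes "shrub n E h"
  shows "mould_act n \<sigma> (fP n E h) u = rooted_sum (shrub_adj n E h) {0..n} 0 (ext_u n u \<circ> \<sigma>)"
proof -
  let ?v = "\<lambda>i. ext_u n u (\<sigma> i)"
  have "ext_u n ?v x = ext_u n u (\<sigma> x)" if "x \<noteq> 0" for x
    using that by (simp add: ext_u_def)
  then have "rooted_sum (shrub_adj n E h) {0..n} 0 (ext_u n ?v)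
      = rooted_sum (shrub_adj n E h) {0..n} 0 (ext_u n u \<circ> \<sigma>)"
    by (intro rooted_sum_cong) simp
  then show ?thesis unfolding mould_act_def fP_eq_rooted_sum[OF assms(1)] by simp
qed

lemma shrub_adj_permute:
  assumes G: "rooted_shrub adj {0..n} 0 dep" and "k \<in> {0..n}" "\<sigma> permutes {0..n}" "\<sigma> k = 0"
  shows "\<exists>E' h'. shrub n E' h' \<and> shrub_adj n E' h' = (\<lambda>x y. adj (inv \<sigma> x) (inv \<sigma> y))"
proof -
  obtain d where "rooted_shrub adj {0..n} k d"
    using rooted_shrub_change_root[OF G \<open>k \<in> {0..n}\<close>] by blast
  then have "rooted_shrub (\<lambda>x y. adj (inv \<sigma> x) (inv \<sigma> y)) {0..n} 0 (d \<circ> inv \<sigma>)"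
    using rooted_shrub_permute[OF _ assms(3)] assms(4) by metis
  then show ?thesis using shrub_of_rooted_shrub shrub_adj_graph_edges by blast
qed

theorem mainTheorem16:
  fixes n :: nat and \<sigma> :: "nat \<Rightarrow> nat" and E :: "nat set set" and h :: "nat \<Rightarrow> nat"
  assumes "1 \<le> n" and "\<sigma> permutes {0..n}" and "shrub n E h"
  shows "\<exists>(\<epsilon>::rat) E' h'. \<epsilon> \<in> {1, -1} \<and> shrub n E' h' \<and>
           (\<forall>u. generic n u \<longrightarrow> mould_act n \<sigma> (fP n E h) u = \<epsilon> * fP n E' h' u)"
proof -
  let ?adj = "shrub_adj n E h" and ?V = "{0..n}"
  define k where "k = inv \<sigma> 0"
  have k: "k \<in> ?V" "\<sigma> k = 0"
    using permutes_in_image[OF permutes_inv[OF assms(2)]] permutes_inverses(1)[OF assms(2)]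
    by (auto simp: k_def)
  have G: "rooted_shrub ?adj ?V 0 (shrub_dep h)" using assms(3) by (rule rooted_shrub_of_shrub)
  obtain E' h' where S': "shrub n E' h'" and adj': "shrub_adj n E' h' = (\<lambda>x y. ?adj (inv \<sigma> x) (inv \<sigma> y))"
    using shrub_adj_permute[OF G k(1) assms(2) k(2)] by blast
  define \<epsilon> :: rat where "\<epsilon> = (-1) ^ shrub_dep h k"
  have "mould_act n \<sigma> (fP n E h) u = \<epsilon> * fP n E' h' u" if "generic n u" for u
  proof -
    have "mould_act n \<sigma> (fP n E h) u = rooted_sum ?adj ?V 0 (ext_u n u \<circ> \<sigma>)"
      by (rule mould_act_fP[OF assms(3)])
    also have "\<dots> = \<epsilon> * rooted_sum ?adj ?V k (ext_u n u \<circ> \<sigma>)"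
      using rooted_sum_change_root[OF G k(1) balanced_generic_permute[OF assms(2)
          balanced_generic_ext_u[OF that]]] by (simp add: \<epsilon>_def)
    also have "\<dots> = \<epsilon> * fP n E' h' u"
      using rooted_sum_permute[OF assms(2)] fP_eq_rooted_sum[OF S'] adj' k(2) by simp
    finally show ?thesis .
  qed
  moreover have "\<epsilon> \<in> {1, -1}"
    unfolding \<epsilon>_def by (cases "even (shrub_dep h k)") (simp_all add: neg_one_even_power neg_one_odd_power)
  ultimately show ?thesis using S' by blast
qed

end
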